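(* Consider a strictly hyperbolic quasilinear system $\frac{\partial U}{\partial x}+M(u,v)\frac{\partial U}{\partial y}=0$, $U=(u,v)^T$, $M=\|m_{ij}(u,v)\|_{i,j=1,2}$, together with the (normal, locally solvable) Cauchy problem $U(x(\tau),y(\tau))=U^0(\tau)$, $\tau\in[a,b]$, on a non-characteristic arc $C$ of an initial curve $L=\{(x(\tau),y(\tau))\}$. Then solving this Cauchy problem is equivalent to solving two Cauchy problems for the linear system $$\lambda_1\frac{\partial\varphi}{\partial r_1}=\frac{\partial\psi}{\partial r_1},\qquad \lambda_2\frac{\partial\varphi}{\partial r_2}=\frac{\partial\psi}{\partial r_2}$$ for unknown functions $\varphi(r_1,r_2),\psi(r_1,r_2)$: the first with the conditions $$\left.(\psi-\lambda_1\varphi)\right|_{r_1=r_1^0}=1,\qquad \left.(\psi-\lambda_2\varphi)\right|_{r_2=r_2^0}=0,$$ and the second with the conditions $$\left.(\psi/\lambda_1-\varphi)\right|_{r_1=r_1^0}=1,\qquad \left.(\psi/\lambda_2-\varphi)\right|_{r_2=r_2^0}=0.$$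
   Context: Strict hyperbolicity means $M$ has two distinct real eigenvalues $\lambda_1,\lambda_2$; with left eigenvectors $l_k=(l_k^1,l_k^2)$, integrals $\Phi_k(u,v)=\mathrm{const}$ of the forms $l_k^1du+l_k^2dv=0$ define Riemann invariants $r_k=\Phi_k(u,v)$, in which the system becomes $\frac{\partial r_k}{\partial x}+\lambda_k\frac{\partial r_k}{\partial y}=0$, $k=1,2$; $\lambda_k$ are regarded as functions of $(r_1,r_2)$. The characteristic curves are $dy/dx=\lambda_k$; $r_k$ is constant along the $k$-th family. A pair $(\varphi,\psi)$ solving the linear system gives a conservation law $\frac{\partial}{\partial x}\varphi+\frac{\partial}{\partial y}\psi=0$ of the quasilinear system. Let $P=(x(a),y(a))$, $Q=(x(b),y(b))$ be the endpoints of $C$, $r_1^0$ the value of $r_1$ at $Q$ and $r_2^0$ the value of $r_2$ at $P$, and let $M=(M_x,M_y)$ be the intersection point of the characteristic $r_1=r_1^0$ issuing from $Q$ and the characteristic $r_2=r_2^0$ issuing from $P$. The equivalence is in the sense that, with $(\varphi,\psi)$ the solution of the first linear problem, $M_x=x(b)-\int_{PQ}\big(\psi\frac{dx}{d\tau}-\varphi\frac{dy}{d\tau}\big)d\tau$, and with $(\varphi,\psi)$ the solution of the second linear problem, $M_y=y(b)-\int_{PQ}\big(\psi\frac{dx}{d\tau}-\varphi\frac{dy}{d\tau}\big)d\tau$; the values of $u,v$ at $M$ are then recovered from the initial data (since $r_1,r_2$ at $M$ equal $r_1^0,r_2^0$). *)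

theory Defs
  imports "HOL-Analysis.Analysis"
begin

definition pd1 :: "(real \<times> real \<Rightarrow> real) \<Rightarrow> real \<times> real \<Rightarrow> real" where
  "pd1 f p = frechet_derivative f (at p) (1, 0)"

definition pd2 :: "(real \<times> real \<Rightarrow> real) \<Rightarrow> real \<times> real \<Rightarrow> real" where
  "pd2 f p = frechet_derivative f (at p) (0, 1)"

definition C1_on :: "(real \<times> real \<Rightarrow> real) \<Rightarrow> (real \<times> real) set \<Rightarrow> bool" where
  "C1_on f S \<longleftrightarrow> f differentiable_on S \<and> continuous_on S (pd1 f) \<and> continuous_on S (pd2 f)"

definition rinv ::
  "(real \<times> real \<Rightarrow> real) \<Rightarrow> (real \<times> real \<Rightarrow> real) \<Rightarrow>
   (real \<times> real \<Rightarrow> real) \<Rightarrow> (real \<times> real \<Rightarrow> real) \<Rightarrow> real \<times> real \<Rightarrow> real \<times> real" where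
  "rinv \<Phi>1 \<Phi>2 u v p = (\<Phi>1 (u p, v p), \<Phi>2 (u p, v p))"

definition lin_sys ::
  "(real \<times> real \<Rightarrow> real) \<Rightarrow> (real \<times> real \<Rightarrow> real) \<Rightarrow> (real \<times> real) set \<Rightarrow>
   (real \<times> real \<Rightarrow> real) \<Rightarrow> (real \<times> real \<Rightarrow> real) \<Rightarrow> bool" where
  "lin_sys lam1 lam2 R \<phi> \<psi> \<longleftrightarrow> C1_on \<phi> R \<and> C1_on \<psi> R \<and>
     (\<forall>z\<in>R. lam1 z * pd1 \<phi> z = pd1 \<psi> z \<and> lam2 z * pd2 \<phi> z = pd2 \<psi> z)"

definition lin_problem1 where
  "lin_problem1 lam1 lam2 R r10 r20 \<phi> \<psi> \<longleftrightarrow> lin_sys lam1 lam2 R \<phi> \<psi> \<and>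
     (\<forall>s. (r10, s) \<in> R \<longrightarrow> \<psi> (r10, s) - lam1 (r10, s) * \<phi> (r10, s) = 1) \<and>
     (\<forall>s. (s, r20) \<in> R \<longrightarrow> \<psi> (s, r20) - lam2 (s, r20) * \<phi> (s, r20) = 0)"

definition lin_problem2 where
  "lin_problem2 lam1 lam2 R r10 r20 \<phi> \<psi> \<longleftrightarrow> lin_sys lam1 lam2 R \<phi> \<psi> \<and>
     (\<forall>s. (r10, s) \<in> R \<longrightarrow> \<psi> (r10, s) / lam1 (r10, s) - \<phi> (r10, s) = 1) \<and>
     (\<forall>s. (s, r20) \<in> R \<longrightarrow> \<psi> (s, r20) / lam2 (s, r20) - \<phi> (s, r20) = 0)"

end

theory Submission
  imports Defs "HOL-Complex_Analysis.Complex_Analysis"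
begin

definition re_primitive_on :: "(complex \<Rightarrow> real) \<Rightarrow> (complex \<Rightarrow> complex) \<Rightarrow> complex set \<Rightarrow> bool" where
  "re_primitive_on V f T \<longleftrightarrow> (\<forall>w\<in>T. (V has_derivative (\<lambda>h. Re (f w * h))) (at w within T))"

lemma re_primitive_on_subset:
  "re_primitive_on V f T \<Longrightarrow> T' \<subseteq> T \<Longrightarrow> re_primitive_on V f T'"
  unfolding re_primitive_on_def by (meson has_derivative_subset subsetD)

lemma has_integral_re_primitive:
  assumes "a \<le> b" and V: "re_primitive_on V f S"
    and g: "g piecewise_differentiable_on {a..b}" "g ` {a..b} \<subseteq> S"
  shows "((\<lambda>x. Re (f (g x) * vector_derivative g (at x within {a..b})))
           has_integral V (g b) - V (g a)) {a..b}"
proof -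
  obtain K where "finite K" and K: "\<forall>x\<in>{a..b} - K. g differentiable (at x within {a..b})"
    and cg: "continuous_on {a..b} g"
    using g by (auto simp: piecewise_differentiable_on_def)
  have dV: "(V has_derivative (\<lambda>h. Re (f w * h))) (at w within S)" if "w \<in> S" for w
    using V that by (simp add: re_primitive_on_def)
  have "continuous_on (g ` {a..b}) V"
    using continuous_on_subset[OF has_derivative_continuous_on[OF dV] g(2)] .
  then have cVg: "continuous_on {a..b} (\<lambda>x. V (g x))"
    using continuous_on_compose[OF cg] by (simp add: o_def)
  have "((\<lambda>x. V (g x)) has_vector_derivative Re (f (g x) * vector_derivative g (at x within {a..b})))
          (at x)" if x: "x \<in> {a<..<b} - K" for x
  proof -
    have "g differentiable at x within {a..b}"
      using K x by simp
    then have gd: "(g has_derivative (\<lambda>u. u *\<^sub>R vector_derivative g (at x within {a..b}))) (at x within {a..b})"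
      by (simp add: vector_derivative_works has_vector_derivative_def)
    have Vd: "(V has_derivative (\<lambda>h. Re (f (g x) * h))) (at (g x) within g ` {a..b})"
      by (rule has_derivative_subset[OF dV]) (use g(2) x in auto)
    from diff_chain_within[OF gd Vd]
    have "((\<lambda>x. V (g x)) has_vector_derivative Re (f (g x) * vector_derivative g (at x within {a..b})))
          (at x within {a..b})"
      by (simp add: has_vector_derivative_def o_def scaleR_conv_of_real algebra_simps)
    then show ?thesis
      using x by (simp add: at_within_Icc_at)
  qed
  then show ?thesis
    by (rule fundamental_theorem_of_calculus_interior_strong[OF \<open>finite K\<close> \<open>a \<le> b\<close> _ cVg])
qed

lemma re_contour_integral_primitive:
  assumes V: "re_primitive_on V f S"
    and g: "valid_path g" "path_image g \<subseteq> S" and fg: "f contour_integrable_on g"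
  shows "Re (contour_integral g f) = V (pathfinish g) - V (pathstart g)"
proof -
  have "((\<lambda>x. Re (f (g x) * vector_derivative g (at x within {0..1})))
          has_integral V (g 1) - V (g 0)) {0..1}"
  proof (rule has_integral_re_primitive[OF zero_le_one V])
    show "g piecewise_differentiable_on {0..1}"
      using g(1) by (simp add: valid_path_def piecewise_C1_imp_differentiable)
    show "g ` {0..1} \<subseteq> S"
      using g(2) by (simp add: path_image_def)
  qed
  moreover have "((\<lambda>x. Re (f (g x) * vector_derivative g (at x within {0..1})))
                   has_integral Re (contour_integral g f)) {0..1}"
    using has_integral_linear[OF fg[THEN has_contour_integral_integral, unfolded has_contour_integral_def]
        bounded_linear_Re]
    by (simp add: o_def)
  ultimately show ?thesis
    using has_integral_unique by (auto simp: pathstart_def pathfinish_def)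
qed

lemma re_contour_integral_strip:
  assumes V: "re_primitive_on V f B" and "convex B" and cf: "continuous_on B f"
    and g: "valid_path g" "f contour_integrable_on g" and h: "valid_path h" "f contour_integrable_on h"
    and uv: "0 \<le> u" "u \<le> v" "v \<le> 1"
    and gB: "g ` {u..v} \<subseteq> B" and hB: "h ` {u..v} \<subseteq> B"
  shows "Re (contour_integral (subpath u v h) f) - Re (contour_integral (subpath u v g) f) =
         Re (contour_integral (linepath (g v) (h v)) f) - Re (contour_integral (linepath (g u) (h u)) f)"
proof -
  have ends: "g u \<in> B" "g v \<in> B" "h u \<in> B" "h v \<in> B"
    using gB hB uv by auto
  have sub: "Re (contour_integral (subpath u v q) f) = V (q v) - V (q u)"
    if "valid_path q" "f contour_integrable_on q" "q ` {u..v} \<subseteq> B" for q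
    using re_contour_integral_primitive[OF V] that uv
    by (simp add: valid_path_subpath contour_integrable_subpath path_image_subpath)
  have line: "Re (contour_integral (linepath p q) f) = V q - V p" if "p \<in> B" "q \<in> B" for p q
  proof -
    have "closed_segment p q \<subseteq> B"
      using \<open>convex B\<close> that by (simp add: closed_segment_subset)
    then show ?thesis
      using re_contour_integral_primitive[OF V]
      by (simp add: contour_integrable_continuous_linepath continuous_on_subset[OF cf])
  qed
  show ?thesis
    using sub[OF g gB] sub[OF h hB] line ends by simp
qed

lemma re_contour_integral_nearby_loops:
  assumes cf: "continuous_on S f"
    and cover: "\<And>t. t \<in> {0..1} \<Longrightarrow> ball (g t) d \<subseteq> S \<and> (\<exists>V. re_primitive_on V f (ball (g t) d))"
    and near: "\<And>t. t \<in> {0..1} \<Longrightarrow> norm (h t - g t) < d/2"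
    and g: "valid_path g" "pathfinish g = pathstart g" "f contour_integrable_on g"
    and h: "valid_path h" "pathfinish h = pathstart h" "f contour_integrable_on h"
  shows "Re (contour_integral h f) = Re (contour_integral g f)"
proof -
  have "norm (h 0 - g 0) < d/2"
    using near by simp
  then have "d > 0"
    using norm_ge_zero[of "h 0 - g 0"] by linarith
  have "uniformly_continuous_on {0..1} g"
    using valid_path_imp_path[OF g(1)] unfolding path_def by (intro compact_uniformly_continuous) auto
  then obtain \<delta> where "\<delta> > 0"
    and \<delta>: "\<And>s t. s \<in> {0..1} \<Longrightarrow> t \<in> {0..1} \<Longrightarrow> dist t s < \<delta> \<Longrightarrow> dist (g t) (g s) < d/2"
    by (rule uniformly_continuous_onE[of _ _ "d/2"]) (use \<open>d > 0\<close> in auto)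
  obtain N :: nat where "N > 0" and N: "1 / N < \<delta>"
  proof -
    obtain n :: nat where "1 / Suc n < \<delta>"
      by (rule nat_approx_posE[OF \<open>\<delta> > 0\<close>])
    then show thesis
      using that[of "Suc n"] by simp
  qed
  define D where "D s = Re (contour_integral (subpath 0 s h) f) - Re (contour_integral (subpath 0 s g) f)
                        - Re (contour_integral (linepath (g s) (h s)) f)" for s
  have "D (n / N) = D 0" if "n \<le> N" for n
    using that
  proof (induction n)
    case (Suc n)
    define u v where "u = n / N" and "v = Suc n / N"
    have uv: "0 \<le> u" "u \<le> v" "v \<le> 1"
      using Suc.prems \<open>N > 0\<close> by (auto simp: u_def v_def divide_simps)
    have "u \<in> {0..1}"
      using uv by simp
    then obtain V where B: "ball (g u) d \<subseteq> S" and V: "re_primitive_on V f (ball (g u) d)"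
      using cover by blast
    have "g s \<in> ball (g u) d \<and> h s \<in> ball (g u) d" if s: "s \<in> {u..v}" for s
    proof -
      have "dist s u \<le> v - u"
        using s by (simp add: dist_real_def)
      also have "v - u = 1 / N"
        by (simp add: u_def v_def diff_divide_distrib[symmetric])
      finally have "dist s u < \<delta>"
        using N by linarith
      then have "dist (g u) (g s) < d/2"
        using \<delta>[of u s] s uv by (simp add: dist_commute)
      moreover have "dist (g s) (h s) < d/2"
        using near[of s] s uv by (simp add: dist_norm norm_minus_commute)
      ultimately show ?thesis
        using dist_triangle[of "g u" "h s" "g s"] \<open>d > 0\<close> unfolding mem_ball by linarith
    qed
    then have "g ` {u..v} \<subseteq> ball (g u) d" "h ` {u..v} \<subseteq> ball (g u) d"
      by auto
    then have strip: "Re (contour_integral (subpath u v h) f) - Re (contour_integral (subpath u v g) f) =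
         Re (contour_integral (linepath (g v) (h v)) f) - Re (contour_integral (linepath (g u) (h u)) f)"
      by (rule re_contour_integral_strip[OF V convex_ball continuous_on_subset[OF cf B] g(1,3) h(1,3) uv])
    have combine: "Re (contour_integral (subpath 0 u q) f) + Re (contour_integral (subpath u v q) f) =
                   Re (contour_integral (subpath 0 v q) f)"
      if "valid_path q" "f contour_integrable_on q" for q
    proof -
      have "{0, u, v} \<subseteq> {0..1}"
        using uv by auto
      then show ?thesis
        using contour_integral_subpath_combine[OF that(2,1), of 0 u v] by (simp add: flip: plus_complex.sel(1))
    qed
    have "D v = D u"
      using strip combine[OF g(1,3)] combine[OF h(1,3)] by (simp add: D_def)
    then show ?case
      using Suc by (simp add: u_def v_def)
  qed simp
  from this[of N] have "D 1 = D 0"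
    using \<open>N > 0\<close> by simp
  moreover have "linepath (g 1) (h 1) = linepath (g 0) (h 0)"
    using g(2) h(2) by (simp add: pathstart_def pathfinish_def)
  ultimately show ?thesis
    by (simp add: D_def subpath_trivial)
qed

definition re_locally_exact :: "complex set \<Rightarrow> (complex \<Rightarrow> complex) \<Rightarrow> bool" where
  "re_locally_exact S f \<longleftrightarrow> (\<forall>z\<in>S. \<exists>e>0. ball z e \<subseteq> S \<and> (\<exists>V. re_primitive_on V f (ball z e)))"

lemma re_locally_exact_uniform_radius:
  assumes "re_locally_exact S f" "compact K" "K \<subseteq> S"
  obtains d where "d > 0" "\<And>z. z \<in> K \<Longrightarrow> ball z d \<subseteq> S \<and> (\<exists>V. re_primitive_on V f (ball z d))"
proof -
  define \<G> where "\<G> = {ball z e | z e. ball z e \<subseteq> S \<and> (\<exists>V. re_primitive_on V f (ball z e))}"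
  have KG: "K \<subseteq> \<Union>\<G>"
  proof
    fix z assume "z \<in> K"
    then obtain e where "e > 0" "ball z e \<subseteq> S" "\<exists>V. re_primitive_on V f (ball z e)"
      using assms(1,3) \<open>z \<in> K\<close> unfolding re_locally_exact_def by blast
    then have "ball z e \<in> \<G>"
      by (auto simp: \<G>_def)
    with \<open>e > 0\<close> show "z \<in> \<Union>\<G>"
      by (meson UnionI centre_in_ball)
  qed
  have "\<And>G. G \<in> \<G> \<Longrightarrow> open G"
    by (auto simp: \<G>_def)
  then obtain d where "d > 0" and d: "\<And>z. z \<in> K \<Longrightarrow> \<exists>G\<in>\<G>. ball z d \<subseteq> G"
    using Heine_Borel_lemma[OF \<open>compact K\<close> KG] by blast
  show thesis
  proof (rule that[OF \<open>d > 0\<close>])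
    fix z assume "z \<in> K"
    then obtain c r V where "ball z d \<subseteq> ball c r" "ball c r \<subseteq> S" "re_primitive_on V f (ball c r)"
      using d unfolding \<G>_def by blast
    then show "ball z d \<subseteq> S \<and> (\<exists>V. re_primitive_on V f (ball z d))"
      using re_primitive_on_subset by blast
  qed
qed

lemma contour_integrable_polynomial_function:
  assumes p: "polynomial_function p" and f: "continuous_on (path_image p) f"
  shows "f contour_integrable_on p"
proof -
  obtain p' where p': "polynomial_function p'" "\<And>x. (p has_vector_derivative (p' x)) (at x)"
    using has_vector_derivative_polynomial_function[OF p] by blast
  have "vector_derivative p (at x) = p' x" for x
    using p'(2) vector_derivative_at by blast
  moreover have "continuous_on {0..1} (\<lambda>t. f (p t) * p' t)"
    using p p'(1) continuous_on_polymonial_function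
    by (intro continuous_intros continuous_on_compose2[OF f]) (auto simp: path_image_def)
  ultimately show ?thesis
    unfolding contour_integrable_on by (simp add: integrable_continuous_real)
qed

lemma re_contour_integral_homotopic_loops:
  assumes hom: "homotopic_loops S g h" and cf: "continuous_on S f" and ex: "re_locally_exact S f"
    and g: "valid_path g" "f contour_integrable_on g" and h: "valid_path h" "f contour_integrable_on h"
  shows "Re (contour_integral g f) = Re (contour_integral h f)"
proof -
  obtain k :: "real \<times> real \<Rightarrow> complex" where contk: "continuous_on ({0..1} \<times> {0..1}) k" and kS: "k \<in> ({0..1} \<times> {0..1}) \<rightarrow> S"
    and k0: "\<forall>x\<in>{0..1}. k (0, x) = g x" and k1: "\<forall>x\<in>{0..1}. k (1, x) = h x"
    and kloop: "\<forall>t\<in>{0..1}. pathfinish (k \<circ> Pair t) = pathstart (k \<circ> Pair t)"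
    using hom unfolding homotopic_loops by (elim exE conjE) blast
  define K where "K = k ` ({0..1} \<times> {0..1})"
  have K: "compact K" "K \<subseteq> S"
    using kS unfolding K_def by (auto intro!: compact_continuous_image contk compact_Times)
  obtain e where "e > 0"
    and e: "\<And>z. z \<in> K \<Longrightarrow> ball z e \<subseteq> S \<and> (\<exists>V. re_primitive_on V f (ball z e))"
    using re_locally_exact_uniform_radius[OF ex K] by blast
  define d where "d = e/2"
  have "d > 0"
    using \<open>e > 0\<close> by (simp add: d_def)
  have compare: "Re (contour_integral r f) = Re (contour_integral q f)"
    if q: "valid_path q" "pathfinish q = pathstart q" "f contour_integrable_on q"
      and r: "valid_path r" "pathfinish r = pathstart r" "f contour_integrable_on r"
      and qK: "\<And>t. t \<in> {0..1} \<Longrightarrow> \<exists>z\<in>K. dist z (q t) < d"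
      and rq: "\<And>t. t \<in> {0..1} \<Longrightarrow> norm (r t - q t) < d/2" for q r
  proof (rule re_contour_integral_nearby_loops[OF cf _ rq q r])
    fix t :: real assume "t \<in> {0..1}"
    then obtain z where "z \<in> K" "dist z (q t) < d"
      using qK by blast
    then have "ball (q t) d \<subseteq> ball z e"
      using \<open>d > 0\<close> by (simp add: ball_subset_ball_iff d_def dist_commute)
    then show "ball (q t) d \<subseteq> S \<and> (\<exists>V. re_primitive_on V f (ball (q t) d))"
      using e[OF \<open>z \<in> K\<close>] re_primitive_on_subset by blast
  qed
  have "uniformly_continuous_on ({0..1} \<times> {0..1}) k"
    by (intro compact_uniformly_continuous contk compact_Times compact_Icc)
  then obtain \<delta> where "\<delta> > 0" and \<delta>: "\<And>p p'. p \<in> {0..1} \<times> {0..1} \<Longrightarrow> p' \<in> {0..1} \<times> {0..1} \<Longrightarrow>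
      dist p' p < \<delta> \<Longrightarrow> dist (k p') (k p) < d/6"
    by (rule uniformly_continuous_onE[of _ _ "d/6"]) (use \<open>d > 0\<close> in auto)
  obtain N :: nat where "N > 0" and N: "1 / N < \<delta>"
  proof -
    obtain n :: nat where "1 / Suc n < \<delta>"
      by (rule nat_approx_posE[OF \<open>\<delta> > 0\<close>])
    then show thesis
      using that[of "Suc n"] by simp
  qed
  have "\<exists>q. polynomial_function q \<and> pathstart q = pathstart (k \<circ> Pair (n/N)) \<and>
            pathfinish q = pathfinish (k \<circ> Pair (n/N)) \<and> (\<forall>t\<in>{0..1}. norm (q t - k (n/N, t)) < d/6)"
    if "n \<le> N" for n
  proof -
    have "n/N \<in> {0..1}"
      using that by (simp add: divide_simps)
    then have "path (k \<circ> Pair (n/N))"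
      unfolding path_def by (intro continuous_on_compose continuous_intros continuous_on_subset[OF contk]) auto
    then obtain q where "polynomial_function q" "pathstart q = pathstart (k \<circ> Pair (n/N))"
      "pathfinish q = pathfinish (k \<circ> Pair (n/N))" "\<And>t::real. t \<in> {0..1} \<Longrightarrow> norm (q t - (k \<circ> Pair (n/N)) t) < d/6"
      using path_approx_polynomial_function[of "k \<circ> Pair (n/N)" "d/6"] \<open>d > 0\<close> by auto
    then show ?thesis
      by auto
  qed
  then have "\<forall>n. \<exists>q. n \<le> N \<longrightarrow> polynomial_function q \<and> pathstart q = pathstart (k \<circ> Pair (n/N)) \<and>
            pathfinish q = pathfinish (k \<circ> Pair (n/N)) \<and> (\<forall>t\<in>{0..1}. norm (q t - k (n/N, t)) < d/6)"
    by blast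
  from choice[OF this] obtain p where p: "\<And>n. n \<le> N \<Longrightarrow> polynomial_function (p n) \<and>
      pathstart (p n) = pathstart (k \<circ> Pair (n/N)) \<and> pathfinish (p n) = pathfinish (k \<circ> Pair (n/N)) \<and>
      (\<forall>t\<in>{0..1}. norm (p n t - k (n/N, t)) < d/6)"
    by blast
  have pn: "valid_path (p n) \<and> pathfinish (p n) = pathstart (p n) \<and> f contour_integrable_on (p n) \<and>
            (\<forall>t\<in>{0..1}. \<exists>z\<in>K. dist z (p n t) < d)" if "n \<le> N" for n
  proof -
    have nN: "n/N \<in> {0..1}"
      using that by (simp add: divide_simps)
    have near: "dist (k (n/N, t)) (p n t) < d/6" and inK: "k (n/N, t) \<in> K" if "t \<in> {0..1}" for t
      using p[OF \<open>n \<le> N\<close>] that nN by (auto simp: K_def dist_norm norm_minus_commute)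
    have poly: "polynomial_function (p n)"
      using p[OF that] by blast
    have "path_image (p n) \<subseteq> S"
    proof
      fix w assume "w \<in> path_image (p n)"
      then obtain t where t: "t \<in> {0..1}" "w = p n t"
        by (auto simp: path_image_def)
      then have "w \<in> ball (k (n/N, t)) e"
        using near[OF t(1)] \<open>e > 0\<close> by (simp add: d_def)
      then show "w \<in> S"
        using e[OF inK[OF t(1)]] by blast
    qed
    then have "f contour_integrable_on (p n)"
      using contour_integrable_polynomial_function[OF poly] continuous_on_subset[OF cf] by blast
    moreover have "valid_path (p n)"
      using poly by (rule valid_path_polynomial_function)
    moreover have "pathfinish (p n) = pathstart (p n)"
      using p[OF that] kloop nN by simp
    moreover have "\<forall>t\<in>{0..1}. \<exists>z\<in>K. dist z (p n t) < d"
    proof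
      fix t :: real assume "t \<in> {0..1}"
      with near[of t] inK[of t] \<open>d > 0\<close> show "\<exists>z\<in>K. dist z (p n t) < d"
        by (intro bexI[of _ "k (n/N, t)"]) auto
    qed
    ultimately show ?thesis
      by blast
  qed
  have loops: "pathfinish g = pathstart g" "pathfinish h = pathstart h"
    using homotopic_loops_imp_loop[OF hom] by auto
  have "Re (contour_integral (p n) f) = Re (contour_integral g f)" if "n \<le> N" for n
    using that
  proof (induction n)
    case 0
    show ?case
    proof (rule compare[OF g(1) loops(1) g(2)])
      show "valid_path (p 0)" "pathfinish (p 0) = pathstart (p 0)" "f contour_integrable_on (p 0)"
        using pn by auto
      fix t :: real assume t: "t \<in> {0..1}"
      have "k (0, t) \<in> K"
        using t by (auto simp: K_def)
      then show "\<exists>z\<in>K. dist z (g t) < d"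
        using k0 t \<open>d > 0\<close> by (intro bexI[of _ "k (0, t)"]) auto
      have "norm (p 0 t - k (0, t)) < d/6"
        using p[of 0] t by simp
      then show "norm (p 0 t - g t) < d/2"
        using k0 t \<open>d > 0\<close> by simp
    qed
  next
    case (Suc n)
    have "Re (contour_integral (p (Suc n)) f) = Re (contour_integral (p n) f)"
    proof (rule compare)
      show "valid_path (p n)" "pathfinish (p n) = pathstart (p n)" "f contour_integrable_on (p n)"
        "valid_path (p (Suc n))" "pathfinish (p (Suc n)) = pathstart (p (Suc n))"
        "f contour_integrable_on (p (Suc n))"
        using pn Suc.prems by auto
      fix t :: real assume t: "t \<in> {0..1}"
      then show "\<exists>z\<in>K. dist z (p n t) < d"
        using pn Suc.prems by auto
      have "dist (n/N, t) (Suc n/N, t) = 1/N"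
        by (simp add: dist_Pair_Pair dist_real_def diff_divide_distrib[symmetric])
      moreover have "(n/N, t) \<in> {0..1} \<times> {0..1}" "(Suc n/N, t) \<in> {0..1} \<times> {0..1}"
        using Suc.prems t by (auto simp: divide_simps)
      ultimately have "norm (k (n/N, t) - k (Suc n/N, t)) < d/6"
        using \<delta> N by (simp add: dist_norm)
      moreover have "norm (p n t - k (n/N, t)) < d/6" "norm (p (Suc n) t - k (Suc n/N, t)) < d/6"
        using p[of n] p[of "Suc n"] Suc.prems t by auto
      ultimately show "norm (p (Suc n) t - p n t) < d/2"
        using norm_triangle_ineq[of "p (Suc n) t - k (Suc n/N, t)" "k (Suc n/N, t) - p n t"]
          norm_triangle_ineq[of "k (Suc n/N, t) - k (n/N, t)" "k (n/N, t) - p n t"]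
        by (simp add: norm_minus_commute)
    qed
    then show ?case
      using Suc by simp
  qed
  moreover have "Re (contour_integral h f) = Re (contour_integral (p N) f)"
  proof (rule compare[OF _ _ _ h(1) loops(2) h(2)])
    show "valid_path (p N)" "pathfinish (p N) = pathstart (p N)" "f contour_integrable_on (p N)"
      using pn by auto
    fix t :: real assume t: "t \<in> {0..1}"
    then show "\<exists>z\<in>K. dist z (p N t) < d"
      using pn by auto
    show "norm (h t - p N t) < d/2"
    proof -
      have "norm (p N t - k (1, t)) < d/6"
        using p[of N] t \<open>N > 0\<close> by simp
      then show ?thesis
        using k1 t \<open>d > 0\<close> by (simp add: norm_minus_commute)
    qed
  qed
  ultimately show ?thesis
    by simp
qed

lemma re_contour_integral_loop_eq_0:
  assumes "simply_connected S" and cf: "continuous_on S f" and ex: "re_locally_exact S f"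
    and g: "valid_path g" "path_image g \<subseteq> S" "pathfinish g = pathstart g" "f contour_integrable_on g"
  shows "Re (contour_integral g f) = 0"
proof -
  have "pathstart g \<in> S"
    using g by (auto simp: pathstart_in_path_image subsetD)
  then have "homotopic_loops S g (linepath (pathstart g) (pathstart g))"
    using assms(1) g by (simp add: simply_connected_eq_contractible_loop_any valid_path_imp_path)
  from re_contour_integral_homotopic_loops[OF this cf ex g(1,4)] show ?thesis
    using has_contour_integral_integrable[OF has_contour_integral_trivial] by simp
qed

lemma has_integral_radial_derivative:
  fixes F :: "'a::euclidean_space \<Rightarrow> 'a" and DF :: "'a \<Rightarrow> 'a \<Rightarrow>\<^sub>L 'a"
  assumes dF: "\<And>t. t \<in> {0..1} \<Longrightarrow>
      (F has_derivative blinfun_apply (DF (c + t *\<^sub>R (z - c)))) (at (c + t *\<^sub>R (z - c)))"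
    and sym: "\<And>t. t \<in> {0..1} \<Longrightarrow>
      blinfun_apply (DF (c + t *\<^sub>R (z - c))) (z - c) \<bullet> h = blinfun_apply (DF (c + t *\<^sub>R (z - c))) h \<bullet> (z - c)"
  shows "((\<lambda>t. t * (blinfun_apply (DF (c + t *\<^sub>R (z - c))) h \<bullet> (z - c)) + F (c + t *\<^sub>R (z - c)) \<bullet> h)
           has_integral F z \<bullet> h) {0..1}"
proof -
  let ?p = "\<lambda>t. c + t *\<^sub>R (z - c)"
  have "((\<lambda>t. t * (F (?p t) \<bullet> h)) has_vector_derivative
           t * (blinfun_apply (DF (?p t)) h \<bullet> (z - c)) + F (?p t) \<bullet> h) (at t within {0..1})"
    if t: "t \<in> {0..1}" for t
  proof -
    have "(?p has_derivative (\<lambda>s. s *\<^sub>R (z - c))) (at t within {0..1})"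
      by (auto intro!: derivative_eq_intros)
    from has_derivative_in_compose[OF this dF[OF t, THEN has_derivative_at_withinI]]
    have "((\<lambda>t. F (?p t)) has_derivative (\<lambda>s. blinfun_apply (DF (?p t)) (s *\<^sub>R (z - c))))
            (at t within {0..1})"
      by (simp add: o_def)
    then have "((\<lambda>t. t * (F (?p t) \<bullet> h)) has_derivative
        (\<lambda>s. t * (blinfun_apply (DF (?p t)) (s *\<^sub>R (z - c)) \<bullet> h) + s * (F (?p t) \<bullet> h))) (at t within {0..1})"
      by (auto intro!: derivative_eq_intros)
    then show ?thesis
      unfolding has_vector_derivative_def
      by (rule has_derivative_eq_rhs)
        (intro ext, simp only: blinfun.scaleR_right inner_scaleR_left sym[OF t], simp add: algebra_simps)
  qed
  from fundamental_theorem_of_calculus[OF zero_le_one this] show ?thesis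
    by simp
qed

text \<open>Poincar\'e lemma on a ball: the potential is the radial integral
  \<open>V x = \<integral>\<^sub>0\<^sup>1 F (c + t (x - c)) \<bullet> (x - c) dt\<close>, differentiated under the integral sign.\<close>
lemma closed_form_potential_ball:
  fixes F :: "'a::euclidean_space \<Rightarrow> 'a" and DF :: "'a \<Rightarrow> 'a \<Rightarrow>\<^sub>L 'a"
  assumes dF: "\<And>z. z \<in> ball c e \<Longrightarrow> (F has_derivative blinfun_apply (DF z)) (at z)"
    and cont: "continuous_on (ball c e) DF"
    and sym: "\<And>z h k. z \<in> ball c e \<Longrightarrow> blinfun_apply (DF z) h \<bullet> k = blinfun_apply (DF z) k \<bullet> h"
  shows "\<exists>V. \<forall>z\<in>ball c e. (V has_derivative (\<lambda>h. F z \<bullet> h)) (at z)"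
proof -
  define U where "U = ball c e"
  have pin: "c + t *\<^sub>R (x - c) \<in> U" if "x \<in> U" "t \<in> {0..1}" for x t
  proof -
    have "dist c (c + t *\<^sub>R (x - c)) = \<bar>t\<bar> * norm (x - c)"
      by (simp add: dist_norm)
    also have "\<dots> \<le> norm (x - c)"
      using that(2) mult_left_le_one_le[of "norm (x - c)" t] by simp
    also have "\<dots> < e"
      using that(1) by (simp add: U_def dist_norm norm_minus_commute)
    finally show ?thesis
      by (simp add: U_def)
  qed
  have contF: "continuous_on U F"
    using dF by (intro has_derivative_continuous_on) (auto simp: U_def intro: has_derivative_at_withinI)
  define f where "f x t = F (c + t *\<^sub>R (x - c)) \<bullet> (x - c)" for x t
  define fx where "fx x t = t *\<^sub>R (blinfun_inner_left (x - c) o\<^sub>L DF (c + t *\<^sub>R (x - c)))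
                        + blinfun_inner_left (F (c + t *\<^sub>R (x - c)))" for x t
  define V where "V x = integral (cbox 0 1) (f x)" for x
  have fx_apply: "blinfun_apply (fx x t) h =
      t * (blinfun_apply (DF (c + t *\<^sub>R (x - c))) h \<bullet> (x - c)) + F (c + t *\<^sub>R (x - c)) \<bullet> h" for x t h
    by (simp add: fx_def plus_blinfun.rep_eq scaleR_blinfun.rep_eq blinfun_apply_blinfun_compose inner_commute)
  have df: "((\<lambda>x. f x t) has_derivative blinfun_apply (fx x t)) (at x within U)"
    if x: "x \<in> U" and t: "t \<in> cbox 0 1" for x t
  proof -
    have "((\<lambda>x. c + t *\<^sub>R (x - c)) has_derivative (\<lambda>h. t *\<^sub>R h)) (at x within U)"
      by (auto intro!: derivative_eq_intros)
    from has_derivative_in_compose[OF this dF[THEN has_derivative_at_withinI]]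
    have "((\<lambda>x. F (c + t *\<^sub>R (x - c))) has_derivative
            (\<lambda>h. blinfun_apply (DF (c + t *\<^sub>R (x - c))) (t *\<^sub>R h))) (at x within U)"
      using pin[OF x] t by (simp add: o_def U_def)
    then have "((\<lambda>x. F (c + t *\<^sub>R (x - c)) \<bullet> (x - c)) has_derivative
        (\<lambda>h. F (c + t *\<^sub>R (x - c)) \<bullet> h + blinfun_apply (DF (c + t *\<^sub>R (x - c))) (t *\<^sub>R h) \<bullet> (x - c)))
        (at x within U)"
      by (auto intro!: derivative_eq_intros)
    then show ?thesis
      unfolding f_def by (rule has_derivative_eq_rhs) (auto simp: fx_apply blinfun.scaleR_right algebra_simps)
  qed
  have fint: "f x integrable_on cbox 0 1" if "x \<in> U" for x
    unfolding f_def using that pin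
    by (intro integrable_continuous continuous_intros continuous_on_compose2[OF contF]) auto
  have contfx: "continuous_on (U \<times> cbox 0 1) (\<lambda>(x, t). fx x t)"
  proof -
    have pin': "(\<lambda>p. c + snd p *\<^sub>R (fst p - c)) ` (U \<times> cbox 0 1) \<subseteq> U"
      using pin by auto
    have "continuous_on (U \<times> cbox 0 1) (\<lambda>p. DF (c + snd p *\<^sub>R (fst p - c)))"
      by (rule continuous_on_compose2[OF cont[folded U_def] _ pin']) (intro continuous_intros)
    moreover have "continuous_on (U \<times> cbox 0 1) (\<lambda>p. F (c + snd p *\<^sub>R (fst p - c)))"
      by (rule continuous_on_compose2[OF contF _ pin']) (intro continuous_intros)
    ultimately show ?thesis
      unfolding fx_def split_beta by (intro continuous_intros)
  qed
  have "(V has_derivative (\<lambda>h. F z \<bullet> h)) (at z)" if z: "z \<in> U" for z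
  proof -
    have cfx: "continuous_on (cbox 0 1) (fx z)"
      using z by (intro continuous_on_compose2[OF contfx, where f="\<lambda>t. (z, t)", simplified] continuous_intros)
        auto
    have "blinfun_apply (integral (cbox 0 1) (fx z)) h = F z \<bullet> h" for h
    proof -
      have "blinfun_apply (integral (cbox 0 1) (fx z)) h = integral {0..1} (\<lambda>t. blinfun_apply (fx z t) h)"
        using blinfun_apply_integral[OF integrable_continuous[OF cfx]] by simp
      also have "\<dots> = F z \<bullet> h"
        unfolding fx_apply
        by (rule integral_unique, rule has_integral_radial_derivative)
          (use dF sym pin z in \<open>auto simp: U_def\<close>)
      finally show ?thesis .
    qed
    then have "blinfun_apply (integral (cbox 0 1) (fx z)) = (\<lambda>h. F z \<bullet> h)"
      by (intro ext)
    moreover have "(V has_derivative blinfun_apply (integral (cbox 0 1) (fx z))) (at z within U)"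
      unfolding V_def by (rule leibniz_rule[OF df fint contfx z convex_ball[of c e, folded U_def]])
    ultimately show ?thesis
      using at_within_open[OF z] by (simp add: U_def)
  qed
  then show ?thesis
    unfolding U_def by blast
qed

definition pair_of_complex :: "complex \<Rightarrow> real \<times> real" where
  "pair_of_complex z = (Re z, Im z)"

definition complex_of_pair :: "real \<times> real \<Rightarrow> complex" where
  "complex_of_pair p = Complex (fst p) (snd p)"

lemma pair_of_complex_inverse [simp]: "complex_of_pair (pair_of_complex z) = z"
  and complex_of_pair_inverse [simp]: "pair_of_complex (complex_of_pair p) = p"
  by (simp_all add: pair_of_complex_def complex_of_pair_def)

lemma bounded_linear_pair_of_complex: "bounded_linear pair_of_complex"
  unfolding pair_of_complex_def by (intro bounded_linear_Pair bounded_linear_Re bounded_linear_Im)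

lemma bounded_linear_complex_of_pair: "bounded_linear complex_of_pair"
  by (rule linear_conv_bounded_linear[THEN iffD1])
    (auto simp: linear_iff complex_of_pair_def complex_eq_iff)

lemma dist_pair_of_complex: "dist (pair_of_complex z) (pair_of_complex w) = dist z w"
  unfolding pair_of_complex_def dist_Pair_Pair by (simp add: dist_real_def dist_norm cmod_def)

text \<open>The integrand of the 1-form \<open>F \<bullet> (dx, dy)\<close> as a complex line integral: with
  \<open>F = (P, Q)\<close> it is \<open>P - i Q\<close>, whose product with \<open>dz\<close> has real part \<open>P dx + Q dy\<close>.\<close>
definition form_integrand :: "(real \<times> real \<Rightarrow> real \<times> real) \<Rightarrow> complex \<Rightarrow> complex" where
  "form_integrand F z = cnj (complex_of_pair (F (pair_of_complex z)))"

lemma Re_form_integrand_mult: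
  "Re (form_integrand F z * w) = F (pair_of_complex z) \<bullet> pair_of_complex w"
  by (simp add: form_integrand_def complex_of_pair_def pair_of_complex_def inner_prod_def)

lemma continuous_on_form_integrand:
  assumes "continuous_on S F"
  shows "continuous_on (pair_of_complex -` S) (form_integrand F)"
proof -
  have "continuous_on (pair_of_complex -` S) (\<lambda>z. F (pair_of_complex z))"
    by (rule continuous_on_compose2[OF assms linear_continuous_on[OF bounded_linear_pair_of_complex]]) auto
  from continuous_on_compose2[OF linear_continuous_on[OF bounded_linear_complex_of_pair] this]
  show ?thesis
    unfolding form_integrand_def by (intro continuous_on_cnj) auto
qed

lemma closed_form_re_locally_exact:
  fixes F :: "real \<times> real \<Rightarrow> real \<times> real"
  assumes "open \<Omega>"
    and dF: "\<And>p. p \<in> \<Omega> \<Longrightarrow> (F has_derivative blinfun_apply (DF p)) (at p)"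
    and cont: "continuous_on \<Omega> DF"
    and sym: "\<And>p h k. p \<in> \<Omega> \<Longrightarrow> blinfun_apply (DF p) h \<bullet> k = blinfun_apply (DF p) k \<bullet> h"
  shows "re_locally_exact (pair_of_complex -` \<Omega>) (form_integrand F)"
  unfolding re_locally_exact_def
proof
  fix z assume "z \<in> pair_of_complex -` \<Omega>"
  then obtain e where "e > 0" and e: "ball (pair_of_complex z) e \<subseteq> \<Omega>"
    using \<open>open \<Omega>\<close> open_contains_ball by blast
  then obtain V where V: "\<And>q. q \<in> ball (pair_of_complex z) e \<Longrightarrow> (V has_derivative (\<lambda>h. F q \<bullet> h)) (at q)"
    using closed_form_potential_ball[of "pair_of_complex z" e F DF] dF sym continuous_on_subset[OF cont]
    by blast
  have ball: "pair_of_complex w \<in> ball (pair_of_complex z) e \<longleftrightarrow> w \<in> ball z e" for w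
    by (simp add: dist_pair_of_complex)
  have "((\<lambda>w. V (pair_of_complex w)) has_derivative (\<lambda>h. Re (form_integrand F w * h))) (at w)"
    if "w \<in> ball z e" for w
  proof -
    have "((\<lambda>w. V (pair_of_complex w)) has_derivative (\<lambda>h. F (pair_of_complex w) \<bullet> pair_of_complex h)) (at w)"
      using has_derivative_compose[OF bounded_linear_imp_has_derivative[OF bounded_linear_pair_of_complex]
          V[of "pair_of_complex w"]] that ball by (simp add: o_def)
    then show ?thesis
      by (simp only: Re_form_integrand_mult)
  qed
  then have "re_primitive_on (\<lambda>w. V (pair_of_complex w)) (form_integrand F) (ball z e)"
    by (simp add: re_primitive_on_def has_derivative_at_withinI)
  moreover have "ball z e \<subseteq> pair_of_complex -` \<Omega>"
    using e ball by blast
  ultimately show "\<exists>e>0. ball z e \<subseteq> pair_of_complex -` \<Omega> \<and>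
                     (\<exists>V. re_primitive_on V (form_integrand F) (ball z e))"
    using \<open>e > 0\<close> by blast
qed

lemma simply_connected_vimage_pair_of_complex:
  assumes "simply_connected \<Omega>"
  shows "simply_connected (pair_of_complex -` \<Omega>)"
proof -
  have "pair_of_complex -` \<Omega> = complex_of_pair ` \<Omega>"
  proof (intro equalityI subsetI)
    fix z assume "z \<in> pair_of_complex -` \<Omega>"
    then show "z \<in> complex_of_pair ` \<Omega>"
      using image_eqI[of z complex_of_pair "pair_of_complex z"] by simp
  qed auto
  moreover have "\<Omega> homeomorphic complex_of_pair ` \<Omega>"
    unfolding homeomorphic_def homeomorphism_def
    by (intro exI[of _ complex_of_pair] exI[of _ pair_of_complex])
      (auto simp: image_image linear_continuous_on bounded_linear_complex_of_pair
        bounded_linear_pair_of_complex)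
  ultimately show ?thesis
    using homeomorphic_simply_connected assms by metis
qed

definition C1_curve :: "(real \<Rightarrow> real \<times> real) \<Rightarrow> (real \<Rightarrow> real \<times> real) \<Rightarrow> bool" where
  "C1_curve \<gamma> \<gamma>' \<longleftrightarrow> (\<forall>s\<in>{0..1}. (\<gamma> has_vector_derivative \<gamma>' s) (at s within {0..1})) \<and> continuous_on {0..1} \<gamma>'"

definition line_integral ::
    "(real \<times> real \<Rightarrow> real \<times> real) \<Rightarrow> (real \<Rightarrow> real \<times> real) \<Rightarrow> (real \<Rightarrow> real \<times> real) \<Rightarrow> real" where
  "line_integral F \<gamma> \<gamma>' = integral {0..1} (\<lambda>s. F (\<gamma> s) \<bullet> \<gamma>' s)"

lemma re_contour_integral_C1_curve:
  assumes \<gamma>: "C1_curve \<gamma> \<gamma>'" and F: "continuous_on (\<gamma> ` {0..1}) F"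
  shows "valid_path (complex_of_pair \<circ> \<gamma>)" "form_integrand F contour_integrable_on (complex_of_pair \<circ> \<gamma>)"
    and "Re (contour_integral (complex_of_pair \<circ> \<gamma>) (form_integrand F)) = line_integral F \<gamma> \<gamma>'"
proof -
  let ?g = "complex_of_pair \<circ> \<gamma>" and ?g' = "\<lambda>s. complex_of_pair (\<gamma>' s)"
  have d\<gamma>: "\<And>s. s \<in> {0..1} \<Longrightarrow> (\<gamma> has_vector_derivative \<gamma>' s) (at s within {0..1})"
    and c\<gamma>': "continuous_on {0..1} \<gamma>'"
    using \<gamma> by (auto simp: C1_curve_def)
  have dg: "(?g has_vector_derivative ?g' s) (at s within {0..1})" if "s \<in> {0..1}" for s
    using bounded_linear.has_vector_derivative[OF bounded_linear_complex_of_pair d\<gamma>[OF that]]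
    by (simp add: o_def)
  have cg: "continuous_on {0..1} ?g"
    unfolding continuous_on_eq_continuous_within using dg has_vector_derivative_continuous by blast
  have cg': "continuous_on {0..1} ?g'"
    by (intro continuous_on_compose2[OF linear_continuous_on[OF bounded_linear_complex_of_pair] c\<gamma>']) auto
  show "valid_path ?g"
    unfolding valid_path_def piecewise_C1_differentiable_on_def
  proof (intro conjI exI[of _ "{0,1}"])
    show "?g C1_differentiable_on {0..1} - {0, 1}"
      unfolding C1_differentiable_on_def
    proof (intro exI conjI ballI)
      fix s :: real assume s: "s \<in> {0..1} - {0, 1}"
      then have "at s within {0..1} = at s"
        by (intro at_within_interior) auto
      then show "(?g has_vector_derivative ?g' s) (at s)"
        using dg[of s] s by simp
    qed (rule continuous_on_subset[OF cg'], auto)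
  qed (use cg in auto)
  have c\<gamma>: "continuous_on {0..1} \<gamma>"
    unfolding continuous_on_eq_continuous_within using d\<gamma> has_vector_derivative_continuous by blast
  have "continuous_on {0..1} (\<lambda>s. F (\<gamma> s))"
    by (rule continuous_on_compose2[OF F c\<gamma>]) auto
  then have cint: "continuous_on {0..1} (\<lambda>s. form_integrand F (?g s) * ?g' s)"
    unfolding form_integrand_def
    by (intro continuous_intros cg' continuous_on_compose2[OF linear_continuous_on[OF bounded_linear_complex_of_pair]])
      auto
  have "((\<lambda>s. form_integrand F (?g s) * vector_derivative ?g (at s within {0..1})) has_integral
          integral {0..1} (\<lambda>s. form_integrand F (?g s) * ?g' s)) {0..1}"
    by (rule has_integral_spike_finite[OF finite.emptyI _ integrable_integral[OF integrable_continuous_real[OF cint]]])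
      (use dg vector_derivative_within_closed_interval[of 0 1 _ ?g] in auto)
  then have hci: "(form_integrand F has_contour_integral integral {0..1} (\<lambda>s. form_integrand F (?g s) * ?g' s)) ?g"
    by (simp add: has_contour_integral_def)
  then show "form_integrand F contour_integrable_on ?g"
    by (rule has_contour_integral_integrable)
  have "Re (contour_integral ?g (form_integrand F)) = integral {0..1} (\<lambda>s. Re (form_integrand F (?g s) * ?g' s))"
    using contour_integral_unique[OF hci] integral_linear[OF integrable_continuous_real[OF cint] bounded_linear_Re]
    by (simp add: o_def)
  also have "\<dots> = line_integral F \<gamma> \<gamma>'"
    unfolding line_integral_def Re_form_integrand_mult by simp
  finally show "Re (contour_integral ?g (form_integrand F)) = line_integral F \<gamma> \<gamma>'" .
qed

lemma closed_form_triangle_line_integral: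
  fixes F :: "real \<times> real \<Rightarrow> real \<times> real"
  assumes "open \<Omega>" "simply_connected \<Omega>"
    and dF: "\<And>p. p \<in> \<Omega> \<Longrightarrow> (F has_derivative blinfun_apply (DF p)) (at p)"
    and cont: "continuous_on \<Omega> DF"
    and sym: "\<And>p h k. p \<in> \<Omega> \<Longrightarrow> blinfun_apply (DF p) h \<bullet> k = blinfun_apply (DF p) k \<bullet> h"
    and \<gamma>: "C1_curve \<gamma>0 \<gamma>0'" "C1_curve \<gamma>1 \<gamma>1'" "C1_curve \<gamma>2 \<gamma>2'"
    and \<gamma>\<Omega>: "\<gamma>0 ` {0..1} \<subseteq> \<Omega>" "\<gamma>1 ` {0..1} \<subseteq> \<Omega>" "\<gamma>2 ` {0..1} \<subseteq> \<Omega>"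
    and ends: "\<gamma>0 1 = \<gamma>1 0" "\<gamma>1 1 = \<gamma>2 1" "\<gamma>2 0 = \<gamma>0 0"
  shows "line_integral F \<gamma>0 \<gamma>0' + line_integral F \<gamma>1 \<gamma>1' = line_integral F \<gamma>2 \<gamma>2'"
proof -
  define S where "S = pair_of_complex -` \<Omega>"
  define g0 g1 g2 where "g0 = complex_of_pair \<circ> \<gamma>0" and "g1 = complex_of_pair \<circ> \<gamma>1"
    and "g2 = complex_of_pair \<circ> \<gamma>2"
  have contF: "continuous_on \<Omega> F"
    by (rule has_derivative_continuous_on[of \<Omega> F "\<lambda>p. blinfun_apply (DF p)"])
      (simp add: dF has_derivative_at_withinI)
  note P0 = re_contour_integral_C1_curve[OF \<gamma>(1) continuous_on_subset[OF contF \<gamma>\<Omega>(1)], folded g0_def]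
  note P1 = re_contour_integral_C1_curve[OF \<gamma>(2) continuous_on_subset[OF contF \<gamma>\<Omega>(2)], folded g1_def]
  note P2 = re_contour_integral_C1_curve[OF \<gamma>(3) continuous_on_subset[OF contF \<gamma>\<Omega>(3)], folded g2_def]
  define L where "L = g0 +++ (g1 +++ reversepath g2)"
  have ends': "pathfinish g0 = pathstart g1" "pathfinish g1 = pathstart (reversepath g2)"
    "pathfinish (reversepath g2) = pathstart g0"
    using ends by (auto simp: g0_def g1_def g2_def pathstart_def pathfinish_def reversepath_def)
  have "valid_path L" "form_integrand F contour_integrable_on L"
    unfolding L_def using P0 P1 P2 ends'
    by (auto intro!: valid_path_join contour_integrable_joinI contour_integrable_reversepath)
  moreover have "path_image L = path_image g0 \<union> (path_image g1 \<union> path_image g2)"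
    using ends' by (simp add: L_def path_image_join path_image_reversepath)
  then have "path_image L \<subseteq> S"
    using \<gamma>\<Omega> by (auto simp: path_image_def g0_def g1_def g2_def S_def)
  moreover have "pathfinish L = pathstart L"
    using ends' by (simp add: L_def)
  ultimately have "Re (contour_integral L (form_integrand F)) = 0"
    using re_contour_integral_loop_eq_0[of S "form_integrand F" L]
      simply_connected_vimage_pair_of_complex[OF \<open>simply_connected \<Omega>\<close>]
      continuous_on_form_integrand[OF contF] closed_form_re_locally_exact[OF \<open>open \<Omega>\<close> dF cont sym]
    by (simp add: S_def)
  moreover have "contour_integral L (form_integrand F) = contour_integral g0 (form_integrand F)
      + contour_integral g1 (form_integrand F) - contour_integral g2 (form_integrand F)"
    unfolding L_def using P0 P1 P2 ends'
    by (simp add: contour_integral_reversepath valid_path_join contour_integrable_reversepath)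
  ultimately show ?thesis
    using P0(3) P1(3) P2(3) by simp
qed

lemma C1_curve_linepath_graph:
  fixes g :: "real \<Rightarrow> real" and L :: "real \<times> real \<Rightarrow> real"
  assumes L: "continuous_on S L" and gS: "\<And>t. t \<in> closed_segment c d \<Longrightarrow> (t, g t) \<in> S"
    and g: "\<And>t. t \<in> closed_segment c d \<Longrightarrow> (g has_real_derivative L (t, g t)) (at t within closed_segment c d)"
  shows "C1_curve (\<lambda>s. (linepath c d s, g (linepath c d s)))
           (\<lambda>s. (d - c) *\<^sub>R (1, L (linepath c d s, g (linepath c d s))))"
  unfolding C1_curve_def
proof
  have img: "linepath c d ` {0..1} = closed_segment c d"
    by (rule linepath_image_01)
  have dX: "(linepath c d has_real_derivative d - c) (at s within {0..1})" for s
    unfolding has_real_derivative_iff_has_vector_derivative by (rule has_vector_derivative_linepath_within)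
  have dg: "((\<lambda>s. g (linepath c d s)) has_real_derivative (d - c) * L (linepath c d s, g (linepath c d s)))
             (at s within {0..1})" if s: "s \<in> {0..1}" for s
  proof -
    have "linepath c d s \<in> closed_segment c d"
      unfolding img[symmetric] using s by simp
    then have "(g has_real_derivative L (linepath c d s, g (linepath c d s))) (at (linepath c d s) within linepath c d ` {0..1})"
      unfolding img by (rule g)
    from DERIV_image_chain[OF this dX] show ?thesis
      by (simp add: o_def mult.commute)
  qed
  show "\<forall>s\<in>{0..1}. ((\<lambda>s. (linepath c d s, g (linepath c d s))) has_vector_derivative
          (d - c) *\<^sub>R (1, L (linepath c d s, g (linepath c d s)))) (at s within {0..1})"
    using has_vector_derivative_Pair[OF dX[unfolded has_real_derivative_iff_has_vector_derivative]
        dg[unfolded has_real_derivative_iff_has_vector_derivative]] by simp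
  have "continuous_on {0..1} (\<lambda>s. (linepath c d s, g (linepath c d s)))"
    using dg by (intro continuous_intros continuous_on_linepath DERIV_continuous_on) auto
  moreover have "(\<lambda>s. (linepath c d s, g (linepath c d s))) ` {0..1} \<subseteq> S"
    using gS img by auto
  ultimately have "continuous_on {0..1} (\<lambda>s. L (linepath c d s, g (linepath c d s)))"
    by (rule continuous_on_compose2[OF L])
  then show "continuous_on {0..1} (\<lambda>s. (d - c) *\<^sub>R (1 :: real, L (linepath c d s, g (linepath c d s))))"
    by (intro continuous_intros)
qed

lemma affine_01_in_interval:
  fixes a b s :: real
  assumes "a \<le> b" "s \<in> {0..1}"
  shows "a + s * (b - a) \<in> {a..b}"
proof -
  have "s * (b - a) \<le> b - a" "0 \<le> s * (b - a)"
    using assms mult_right_mono[of s 1 "b - a"] by auto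
  then show ?thesis
    by simp
qed

lemma
  fixes c c' :: "real \<Rightarrow> real \<times> real"
  assumes "a < b" and c: "\<And>t. t \<in> {a..b} \<Longrightarrow> (c has_vector_derivative c' t) (at t within {a..b})"
    and c': "continuous_on {a..b} c'"
  shows C1_curve_rescale: "C1_curve (\<lambda>s. c (a + s * (b - a))) (\<lambda>s. (b - a) *\<^sub>R c' (a + s * (b - a)))"
    and line_integral_rescale: "continuous_on (c ` {a..b}) F \<Longrightarrow>
      line_integral F (\<lambda>s. c (a + s * (b - a))) (\<lambda>s. (b - a) *\<^sub>R c' (a + s * (b - a))) =
      integral {a..b} (\<lambda>t. F (c t) \<bullet> c' t)"
proof -
  let ?\<alpha> = "\<lambda>s. a + s * (b - a)"
  have \<alpha>: "?\<alpha> ` {0..1} \<subseteq> {a..b}"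
    using affine_01_in_interval \<open>a < b\<close> by auto
  have d\<alpha>: "(?\<alpha> has_real_derivative b - a) (at s within {0..1})" for s
    by (auto intro!: derivative_eq_intros)
  have c\<alpha>: "continuous_on {0..1} ?\<alpha>"
    by (intro continuous_intros)
  show "C1_curve (\<lambda>s. c (?\<alpha> s)) (\<lambda>s. (b - a) *\<^sub>R c' (?\<alpha> s))"
    unfolding C1_curve_def
  proof
    show "\<forall>s\<in>{0..1}. ((\<lambda>s. c (?\<alpha> s)) has_vector_derivative (b - a) *\<^sub>R c' (?\<alpha> s)) (at s within {0..1})"
    proof
      fix s :: real assume "s \<in> {0..1}"
      then have "(c has_vector_derivative c' (?\<alpha> s)) (at (?\<alpha> s) within ?\<alpha> ` {0..1})"
        using c \<alpha> by (blast intro: has_vector_derivative_within_subset)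
      from vector_diff_chain_within[OF d\<alpha>[unfolded has_real_derivative_iff_has_vector_derivative] this]
      show "((\<lambda>s. c (?\<alpha> s)) has_vector_derivative (b - a) *\<^sub>R c' (?\<alpha> s)) (at s within {0..1})"
        by (simp add: o_def)
    qed
    show "continuous_on {0..1} (\<lambda>s. (b - a) *\<^sub>R c' (?\<alpha> s))"
      by (intro continuous_intros continuous_on_compose2[OF c' c\<alpha> \<alpha>])
  qed
  assume F: "continuous_on (c ` {a..b}) F"
  have "continuous_on {a..b} c"
    unfolding continuous_on_eq_continuous_within using c has_vector_derivative_continuous by blast
  then have h: "continuous_on {a..b} (\<lambda>t. F (c t) \<bullet> c' t)"
    by (intro continuous_intros c' continuous_on_compose2[OF F]) auto
  have "((\<lambda>s. (b - a) *\<^sub>R (F (c (?\<alpha> s)) \<bullet> c' (?\<alpha> s))) has_integral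
               integral {?\<alpha> 0..?\<alpha> 1} (\<lambda>t. F (c t) \<bullet> c' t)) {0..1}"
    by (rule has_integral_substitution[where c=a and d=b and g="?\<alpha>" and g'="\<lambda>_. b - a", OF _ _ \<alpha> h])
      (use \<open>a < b\<close> d\<alpha> in auto)
  from integral_unique[OF this]
  show "line_integral F (\<lambda>s. c (?\<alpha> s)) (\<lambda>s. (b - a) *\<^sub>R c' (?\<alpha> s)) = integral {a..b} (\<lambda>t. F (c t) \<bullet> c' t)"
    by (simp add: line_integral_def)
qed

lemma C1_on_has_derivative:
  assumes "C1_on f S" "open S" "p \<in> S"
  shows "(f has_derivative (\<lambda>h. fst h * pd1 f p + snd h * pd2 f p)) (at p)"
proof -
  have "f differentiable at p within S"
    using assms unfolding C1_on_def differentiable_on_def by blast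
  then have d: "(f has_derivative frechet_derivative f (at p)) (at p)"
    using at_within_open[OF assms(3,2)] by (simp add: frechet_derivative_works)
  then have lin: "linear (frechet_derivative f (at p))"
    using has_derivative_linear by blast
  have "frechet_derivative f (at p) h = fst h * pd1 f p + snd h * pd2 f p" for h
  proof -
    have "h = fst h *\<^sub>R (1, 0) + snd h *\<^sub>R (0, 1)"
      by (simp add: prod_eq_iff)
    then have "frechet_derivative f (at p) h =
        frechet_derivative f (at p) (fst h *\<^sub>R (1, 0)) + frechet_derivative f (at p) (snd h *\<^sub>R (0, 1))"
      by (metis linear_add[OF lin])
    then show ?thesis
      by (simp only: linear_scale[OF lin] pd1_def pd2_def real_scaleR_def)
  qed
  then have "frechet_derivative f (at p) = (\<lambda>h. fst h * pd1 f p + snd h * pd2 f p)"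
    by (intro ext)
  with d show ?thesis
    by simp
qed

lemma has_derivative_compose_pair:
  fixes A B G :: "real \<times> real \<Rightarrow> real"
  assumes "(A has_derivative (\<lambda>h. fst h * a1 + snd h * a2)) (at p)"
    and "(B has_derivative (\<lambda>h. fst h * b1 + snd h * b2)) (at p)"
    and "(G has_derivative (\<lambda>k. fst k * g1 + snd k * g2)) (at (A p, B p))"
  shows "((\<lambda>p. G (A p, B p)) has_derivative
           (\<lambda>h. fst h * (a1 * g1 + b1 * g2) + snd h * (a2 * g1 + b2 * g2))) (at p)"
  using has_derivative_compose[OF has_derivative_Pair[OF assms(1,2)] assms(3)]
  by (simp add: algebra_simps)

lemma riemann_invariant_transport:
  fixes \<Phi> \<Lambda> u v m11 m12 m21 m22 :: "real \<times> real \<Rightarrow> real"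
  assumes W: "open W" "C1_on \<Phi> W"
    and \<Omega>: "open \<Omega>" "C1_on u \<Omega>" "C1_on v \<Omega>" "\<And>p. p \<in> \<Omega> \<Longrightarrow> (u p, v p) \<in> W"
    and pde: "\<And>p. p \<in> \<Omega> \<Longrightarrow>
        pd1 u p + m11 (u p, v p) * pd2 u p + m12 (u p, v p) * pd2 v p = 0 \<and>
        pd1 v p + m21 (u p, v p) * pd2 u p + m22 (u p, v p) * pd2 v p = 0"
    and eig: "\<And>w. w \<in> W \<Longrightarrow>
        pd1 \<Phi> w * m11 w + pd2 \<Phi> w * m21 w = \<Lambda> w * pd1 \<Phi> w \<and>
        pd1 \<Phi> w * m12 w + pd2 \<Phi> w * m22 w = \<Lambda> w * pd2 \<Phi> w"
  obtains A B where "continuous_on \<Omega> A" "continuous_on \<Omega> B"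
    and "\<And>p. p \<in> \<Omega> \<Longrightarrow> ((\<lambda>p. \<Phi> (u p, v p)) has_derivative (\<lambda>h. fst h * A p + snd h * B p)) (at p)"
    and "\<And>p. p \<in> \<Omega> \<Longrightarrow> A p + \<Lambda> (u p, v p) * B p = 0"
proof
  define A where "A p = pd1 u p * pd1 \<Phi> (u p, v p) + pd1 v p * pd2 \<Phi> (u p, v p)" for p
  define B where "B p = pd2 u p * pd1 \<Phi> (u p, v p) + pd2 v p * pd2 \<Phi> (u p, v p)" for p
  have "continuous_on \<Omega> (\<lambda>p. (u p, v p))"
    using \<Omega> unfolding C1_on_def by (intro continuous_intros differentiable_imp_continuous_on) auto
  then have "continuous_on \<Omega> (\<lambda>p. h (u p, v p))" if "continuous_on W h" for h
    using continuous_on_compose2[OF that] \<Omega>(4) by blast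
  then show "continuous_on \<Omega> A" "continuous_on \<Omega> B"
    using W \<Omega> unfolding A_def B_def C1_on_def by (auto intro!: continuous_intros)
  fix p assume p: "p \<in> \<Omega>"
  show "((\<lambda>p. \<Phi> (u p, v p)) has_derivative (\<lambda>h. fst h * A p + snd h * B p)) (at p)"
    using has_derivative_compose_pair[OF C1_on_has_derivative[OF \<Omega>(2,1) p]
        C1_on_has_derivative[OF \<Omega>(3,1) p] C1_on_has_derivative[OF W(2,1) \<Omega>(4)[OF p]]]
    by (simp add: A_def B_def)
  let ?w = "(u p, v p)"
  have ux: "pd1 u p = - (m11 ?w * pd2 u p + m12 ?w * pd2 v p)"
    and vx: "pd1 v p = - (m21 ?w * pd2 u p + m22 ?w * pd2 v p)"
    using pde[OF p] by (simp_all add: algebra_simps)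
  have "A p = - (pd2 u p * (pd1 \<Phi> ?w * m11 ?w + pd2 \<Phi> ?w * m21 ?w) +
                 pd2 v p * (pd1 \<Phi> ?w * m12 ?w + pd2 \<Phi> ?w * m22 ?w))"
    unfolding A_def ux vx by (simp add: algebra_simps)
  also have "\<dots> = - \<Lambda> ?w * B p"
    using eig[OF \<Omega>(4)[OF p]] by (simp add: B_def algebra_simps)
  finally show "A p + \<Lambda> ?w * B p = 0"
    by simp
qed

text \<open>\<open>\<Lambda>\<close> is the Rayleigh quotient \<open>l M l\<^sup>T / |l|\<^sup>2\<close> of the nonzero left eigenvector \<open>l = \<nabla>\<Phi>\<close>.\<close>
lemma left_eigenvalue_continuous_on:
  fixes \<Phi> \<Lambda> m11 m12 m21 m22 :: "real \<times> real \<Rightarrow> real"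
  assumes "C1_on \<Phi> W" "continuous_on W m11" "continuous_on W m12" "continuous_on W m21" "continuous_on W m22"
    and eig: "\<And>w. w \<in> W \<Longrightarrow>
        pd1 \<Phi> w * m11 w + pd2 \<Phi> w * m21 w = \<Lambda> w * pd1 \<Phi> w \<and>
        pd1 \<Phi> w * m12 w + pd2 \<Phi> w * m22 w = \<Lambda> w * pd2 \<Phi> w \<and> (pd1 \<Phi> w, pd2 \<Phi> w) \<noteq> (0, 0)"
  shows "continuous_on W \<Lambda>"
proof -
  define N where "N w = pd1 \<Phi> w * (pd1 \<Phi> w * m11 w + pd2 \<Phi> w * m21 w)
                      + pd2 \<Phi> w * (pd1 \<Phi> w * m12 w + pd2 \<Phi> w * m22 w)" for w
  define D where "D w = (pd1 \<Phi> w)\<^sup>2 + (pd2 \<Phi> w)\<^sup>2" for w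
  have D: "D w \<noteq> 0" if "w \<in> W" for w
    using eig[OF that] by (simp add: D_def sum_power2_eq_zero_iff)
  have "\<Lambda> w = N w / D w" if "w \<in> W" for w
  proof -
    have "N w = \<Lambda> w * D w"
      using eig[OF that] by (simp add: N_def D_def power2_eq_square algebra_simps)
    then show ?thesis
      using D[OF that] by simp
  qed
  moreover have "continuous_on W (\<lambda>w. N w / D w)"
    using assms D unfolding N_def D_def C1_on_def by (intro continuous_intros) auto
  ultimately show ?thesis
    using continuous_on_eq by force
qed

lemma constant_along_characteristic_graph:
  fixes g L :: "real \<Rightarrow> real" and \<rho> A B :: "real \<times> real \<Rightarrow> real"
  assumes "convex T" and T\<Omega>: "\<And>t. t \<in> T \<Longrightarrow> (t, g t) \<in> \<Omega>"
    and g: "\<And>t. t \<in> T \<Longrightarrow> (g has_real_derivative L t) (at t within T)"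
    and \<rho>: "\<And>p. p \<in> \<Omega> \<Longrightarrow> (\<rho> has_derivative (\<lambda>h. fst h * A p + snd h * B p)) (at p)"
    and transport: "\<And>t. t \<in> T \<Longrightarrow> A (t, g t) + L t * B (t, g t) = 0"
    and "t0 \<in> T" "t \<in> T"
  shows "\<rho> (t, g t) = \<rho> (t0, g t0)"
proof -
  have "((\<lambda>t. \<rho> (t, g t)) has_derivative (\<lambda>h. 0)) (at t within T)" if t: "t \<in> T" for t
  proof -
    have "((\<lambda>t. (t, g t)) has_derivative (\<lambda>s. (s, L t * s))) (at t within T)"
      using g[OF t] by (intro has_derivative_Pair has_derivative_ident) (simp add: has_field_derivative_def)
    from has_derivative_compose[OF this \<rho>[OF T\<Omega>[OF t]]]
    have "((\<lambda>t. \<rho> (t, g t)) has_derivative (\<lambda>s. s * (A (t, g t) + L t * B (t, g t)))) (at t within T)"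
      by (simp add: algebra_simps)
    then show ?thesis
      using transport[OF t] by simp
  qed
  from has_derivative_zero_unique[OF \<open>convex T\<close> this \<open>t \<in> T\<close> \<open>t0 \<in> T\<close>] show ?thesis .
qed

text \<open>For a solution of the linear system, \<open>\<psi>(r) dx - \<phi>(r) dy\<close> is a closed 1-form, because
  the Riemann invariants are transported along the characteristics.\<close>
lemma linear_system_closed_form:
  fixes r1 r2 A1 B1 A2 B2 :: "real \<times> real \<Rightarrow> real"
  assumes "open R" and lin: "lin_sys lam1 lam2 R \<phi> \<psi>"
    and rR: "\<And>p. p \<in> \<Omega> \<Longrightarrow> (r1 p, r2 p) \<in> R"
    and dr1: "\<And>p. p \<in> \<Omega> \<Longrightarrow> (r1 has_derivative (\<lambda>h. fst h * A1 p + snd h * B1 p)) (at p)"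
    and dr2: "\<And>p. p \<in> \<Omega> \<Longrightarrow> (r2 has_derivative (\<lambda>h. fst h * A2 p + snd h * B2 p)) (at p)"
    and tr1: "\<And>p. p \<in> \<Omega> \<Longrightarrow> A1 p + lam1 (r1 p, r2 p) * B1 p = 0"
    and tr2: "\<And>p. p \<in> \<Omega> \<Longrightarrow> A2 p + lam2 (r1 p, r2 p) * B2 p = 0"
    and cont: "continuous_on \<Omega> A1" "continuous_on \<Omega> B1" "continuous_on \<Omega> A2" "continuous_on \<Omega> B2"
  obtains DF where
    "\<And>p. p \<in> \<Omega> \<Longrightarrow> ((\<lambda>p. (\<psi> (r1 p, r2 p), - \<phi> (r1 p, r2 p))) has_derivative blinfun_apply (DF p)) (at p)"
    and "continuous_on \<Omega> DF"
    and "\<And>p h k. p \<in> \<Omega> \<Longrightarrow> blinfun_apply (DF p) h \<bullet> k = blinfun_apply (DF p) k \<bullet> h"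
proof -
  let ?r = "\<lambda>p. (r1 p, r2 p)"
  have \<phi>: "C1_on \<phi> R" and \<psi>: "C1_on \<psi> R"
    and eqs: "\<And>z. z \<in> R \<Longrightarrow> lam1 z * pd1 \<phi> z = pd1 \<psi> z \<and> lam2 z * pd2 \<phi> z = pd2 \<psi> z"
    using lin unfolding lin_sys_def by auto
  have "continuous_on \<Omega> r1"
    by (rule has_derivative_continuous_on[of \<Omega> r1 "\<lambda>p h. fst h * A1 p + snd h * B1 p"])
      (simp add: dr1 has_derivative_at_withinI)
  moreover have "continuous_on \<Omega> r2"
    by (rule has_derivative_continuous_on[of \<Omega> r2 "\<lambda>p h. fst h * A2 p + snd h * B2 p"])
      (simp add: dr2 has_derivative_at_withinI)
  ultimately have cr: "continuous_on \<Omega> ?r"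
    by (intro continuous_intros)
  have comp: "continuous_on \<Omega> (\<lambda>p. h (?r p))" if "continuous_on R h" for h
    by (rule continuous_on_compose2[OF that cr]) (use rR in auto)
  have cpd: "continuous_on \<Omega> (\<lambda>p. pd1 \<psi> (?r p))" "continuous_on \<Omega> (\<lambda>p. pd2 \<psi> (?r p))"
    "continuous_on \<Omega> (\<lambda>p. pd1 \<phi> (?r p))" "continuous_on \<Omega> (\<lambda>p. pd2 \<phi> (?r p))"
    using \<phi> \<psi> unfolding C1_on_def by (auto intro: comp)
  define Fx where "Fx p = (A1 p * pd1 \<psi> (?r p) + A2 p * pd2 \<psi> (?r p), - (A1 p * pd1 \<phi> (?r p) + A2 p * pd2 \<phi> (?r p)))"
    for p
  define Fy where "Fy p = (B1 p * pd1 \<psi> (?r p) + B2 p * pd2 \<psi> (?r p), - (B1 p * pd1 \<phi> (?r p) + B2 p * pd2 \<phi> (?r p)))"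
    for p
  define DF where "DF p = Blinfun (\<lambda>h. fst h *\<^sub>R Fx p + snd h *\<^sub>R Fy p)" for p
  have DF: "blinfun_apply (DF p) h = fst h *\<^sub>R Fx p + snd h *\<^sub>R Fy p" for p h
  proof -
    have "bounded_linear (\<lambda>h :: real \<times> real. fst h *\<^sub>R Fx p + snd h *\<^sub>R Fy p)"
      by (intro bounded_linear_add bounded_linear_scaleR_left bounded_linear_fst bounded_linear_snd
          bounded_linear_compose[OF bounded_linear_scaleR_left])
    then show ?thesis
      by (simp add: DF_def bounded_linear_Blinfun_apply)
  qed
  have deriv: "((\<lambda>p. (\<psi> (?r p), - \<phi> (?r p))) has_derivative blinfun_apply (DF p)) (at p)"
    if p: "p \<in> \<Omega>" for p
  proof -
    have d\<psi>: "((\<lambda>p. \<psi> (?r p)) has_derivative (\<lambda>h. fst h * (A1 p * pd1 \<psi> (?r p) + A2 p * pd2 \<psi> (?r p))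
        + snd h * (B1 p * pd1 \<psi> (?r p) + B2 p * pd2 \<psi> (?r p)))) (at p)"
      by (rule has_derivative_compose_pair[OF dr1[OF p] dr2[OF p] C1_on_has_derivative[OF \<psi> \<open>open R\<close> rR[OF p]]])
    have d\<phi>: "((\<lambda>p. \<phi> (?r p)) has_derivative (\<lambda>h. fst h * (A1 p * pd1 \<phi> (?r p) + A2 p * pd2 \<phi> (?r p))
        + snd h * (B1 p * pd1 \<phi> (?r p) + B2 p * pd2 \<phi> (?r p)))) (at p)"
      by (rule has_derivative_compose_pair[OF dr1[OF p] dr2[OF p] C1_on_has_derivative[OF \<phi> \<open>open R\<close> rR[OF p]]])
    from has_derivative_Pair[OF d\<psi> has_derivative_minus[OF d\<phi>]] show ?thesis
      by (rule has_derivative_eq_rhs) (simp add: DF Fx_def Fy_def fun_eq_iff algebra_simps)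
  qed
  have sym: "blinfun_apply (DF p) h \<bullet> k = blinfun_apply (DF p) k \<bullet> h" if p: "p \<in> \<Omega>" for p h k
  proof -
    have "A1 p = - (lam1 (?r p) * B1 p)" "A2 p = - (lam2 (?r p) * B2 p)"
      using tr1[OF p] tr2[OF p] by linarith+
    moreover have "lam1 (?r p) * pd1 \<phi> (?r p) = pd1 \<psi> (?r p)" "lam2 (?r p) * pd2 \<phi> (?r p) = pd2 \<psi> (?r p)"
      using eqs[OF rR[OF p]] by auto
    ultimately have "snd (Fx p) = fst (Fy p)"
      unfolding Fx_def Fy_def by (simp add: algebra_simps)
    then show ?thesis
      by (simp add: DF inner_prod_def algebra_simps)
  qed
  have "continuous_on \<Omega> Fx" "continuous_on \<Omega> Fy"
    unfolding Fx_def Fy_def by (intro continuous_intros cont cpd)+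
  then have "continuous_on \<Omega> DF"
    by (intro continuous_on_blinfun_componentwise) (simp add: DF, intro continuous_intros)
  then show thesis
    using that deriv sym by blast
qed

locale riemann_invariants =
  fixes \<Omega> R :: "(real \<times> real) set"
    and r1 r2 lam1 lam2 A1 B1 A2 B2 :: "real \<times> real \<Rightarrow> real"
  assumes open_domain: "open \<Omega>" and simply_connected_domain: "simply_connected \<Omega>"
    and open_range: "open R" and invariants_in_range: "\<And>p. p \<in> \<Omega> \<Longrightarrow> (r1 p, r2 p) \<in> R"
    and has_derivative_r1: "\<And>p. p \<in> \<Omega> \<Longrightarrow> (r1 has_derivative (\<lambda>h. fst h * A1 p + snd h * B1 p)) (at p)"
    and has_derivative_r2: "\<And>p. p \<in> \<Omega> \<Longrightarrow> (r2 has_derivative (\<lambda>h. fst h * A2 p + snd h * B2 p)) (at p)"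
    and transport1: "\<And>p. p \<in> \<Omega> \<Longrightarrow> A1 p + lam1 (r1 p, r2 p) * B1 p = 0"
    and transport2: "\<And>p. p \<in> \<Omega> \<Longrightarrow> A2 p + lam2 (r1 p, r2 p) * B2 p = 0"
    and continuous_gradients: "continuous_on \<Omega> A1" "continuous_on \<Omega> B1" "continuous_on \<Omega> A2" "continuous_on \<Omega> B2"
    and continuous_speeds: "continuous_on \<Omega> (\<lambda>p. lam1 (r1 p, r2 p))" "continuous_on \<Omega> (\<lambda>p. lam2 (r1 p, r2 p))"

text \<open>The arc \<open>C\<close> from \<open>P = (x a, y a)\<close> to \<open>Q = (x b, y b)\<close>, the characteristic of the first
  family through \<open>Q\<close> and the one of the second family through \<open>P\<close>, meeting at \<open>M = (Mx, My)\<close>;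
  the characteristics are graphs over the \<open>x\<close>-axis.\<close>
locale characteristic_triangle = riemann_invariants +
  fixes x y xd yd g1 g2 :: "real \<Rightarrow> real" and a b Mx My :: real
  assumes arc_interval: "a < b"
    and x_deriv: "\<And>t. t \<in> {a..b} \<Longrightarrow> (x has_real_derivative xd t) (at t within {a..b})"
    and y_deriv: "\<And>t. t \<in> {a..b} \<Longrightarrow> (y has_real_derivative yd t) (at t within {a..b})"
    and continuous_arc_derivative: "continuous_on {a..b} xd" "continuous_on {a..b} yd"
    and arc_in_domain: "\<And>t. t \<in> {a..b} \<Longrightarrow> (x t, y t) \<in> \<Omega>"
    and g1_start: "g1 (x b) = y b" and g1_end: "g1 Mx = My"
    and g1_in_domain: "\<And>t. t \<in> closed_segment (x b) Mx \<Longrightarrow> (t, g1 t) \<in> \<Omega>"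
    and g1_characteristic: "\<And>t. t \<in> closed_segment (x b) Mx \<Longrightarrow>
      (g1 has_real_derivative lam1 (r1 (t, g1 t), r2 (t, g1 t))) (at t within closed_segment (x b) Mx)"
    and g2_start: "g2 (x a) = y a" and g2_end: "g2 Mx = My"
    and g2_in_domain: "\<And>t. t \<in> closed_segment (x a) Mx \<Longrightarrow> (t, g2 t) \<in> \<Omega>"
    and g2_characteristic: "\<And>t. t \<in> closed_segment (x a) Mx \<Longrightarrow>
      (g2 has_real_derivative lam2 (r1 (t, g2 t), r2 (t, g2 t))) (at t within closed_segment (x a) Mx)"
begin

definition gamma1 :: "real \<Rightarrow> real \<times> real" where
  "gamma1 s = (linepath (x b) Mx s, g1 (linepath (x b) Mx s))"

definition gamma2 :: "real \<Rightarrow> real \<times> real" where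
  "gamma2 s = (linepath (x a) Mx s, g2 (linepath (x a) Mx s))"

lemma linepath_in_closed_segment: "s \<in> {0..1} \<Longrightarrow> linepath c d s \<in> closed_segment c d"
  using linepath_image_01[of c d] by blast

lemma gamma_in_domain:
  assumes "s \<in> {0..1}"
  shows "gamma1 s \<in> \<Omega>" "gamma2 s \<in> \<Omega>"
  using g1_in_domain[OF linepath_in_closed_segment[OF assms]] g2_in_domain[OF linepath_in_closed_segment[OF assms]]
  by (simp_all add: gamma1_def gamma2_def)

lemma r1_along_characteristic: "t \<in> closed_segment (x b) Mx \<Longrightarrow> r1 (t, g1 t) = r1 (x b, y b)"
  using constant_along_characteristic_graph[OF convex_closed_segment g1_in_domain g1_characteristic
      has_derivative_r1 transport1[OF g1_in_domain] ends_in_segment(1)] g1_start by simp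

lemma r2_along_characteristic: "t \<in> closed_segment (x a) Mx \<Longrightarrow> r2 (t, g2 t) = r2 (x a, y a)"
  using constant_along_characteristic_graph[OF convex_closed_segment g2_in_domain g2_characteristic
      has_derivative_r2 transport2[OF g2_in_domain] ends_in_segment(1)] g2_start by simp

lemma invariants_at_meeting_point: "r1 (Mx, My) = r1 (x b, y b)" "r2 (Mx, My) = r2 (x a, y a)"
  using r1_along_characteristic[of Mx] r2_along_characteristic[of Mx] g1_end g2_end by auto

lemma invariants_on_gamma:
  assumes "s \<in> {0..1}"
  shows "(r1 (x b, y b), r2 (gamma1 s)) \<in> R" "r1 (gamma1 s) = r1 (x b, y b)"
    and "(r1 (gamma2 s), r2 (x a, y a)) \<in> R" "r2 (gamma2 s) = r2 (x a, y a)"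
  using invariants_in_range[OF gamma_in_domain(1)[OF assms]] invariants_in_range[OF gamma_in_domain(2)[OF assms]]
    r1_along_characteristic[OF linepath_in_closed_segment[OF assms]]
    r2_along_characteristic[OF linepath_in_closed_segment[OF assms]]
  by (simp_all add: gamma1_def gamma2_def)

lemma C1_curve_gamma:
  "C1_curve gamma1 (\<lambda>s. (Mx - x b) *\<^sub>R (1, lam1 (r1 (gamma1 s), r2 (gamma1 s))))"
  "C1_curve gamma2 (\<lambda>s. (Mx - x a) *\<^sub>R (1, lam2 (r1 (gamma2 s), r2 (gamma2 s))))"
  unfolding gamma1_def gamma2_def
  using C1_curve_linepath_graph[OF continuous_speeds(1) g1_in_domain g1_characteristic]
    C1_curve_linepath_graph[OF continuous_speeds(2) g2_in_domain g2_characteristic]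
  by simp_all

lemma
  shows C1_curve_arc: "C1_curve (\<lambda>s. (x (a + s * (b - a)), y (a + s * (b - a))))
                         (\<lambda>s. (b - a) *\<^sub>R (xd (a + s * (b - a)), yd (a + s * (b - a))))"
    and line_integral_arc: "continuous_on ((\<lambda>t. (x t, y t)) ` {a..b}) F \<Longrightarrow>
      line_integral F (\<lambda>s. (x (a + s * (b - a)), y (a + s * (b - a))))
                      (\<lambda>s. (b - a) *\<^sub>R (xd (a + s * (b - a)), yd (a + s * (b - a)))) =
      integral {a..b} (\<lambda>t. F (x t, y t) \<bullet> (xd t, yd t))"
proof -
  have d: "\<And>t. t \<in> {a..b} \<Longrightarrow> ((\<lambda>t. (x t, y t)) has_vector_derivative (xd t, yd t)) (at t within {a..b})"
    using x_deriv y_deriv by (simp add: has_vector_derivative_Pair has_real_derivative_iff_has_vector_derivative)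
  have c: "continuous_on {a..b} (\<lambda>t. (xd t, yd t))"
    by (intro continuous_intros continuous_arc_derivative)
  show "C1_curve (\<lambda>s. (x (a + s * (b - a)), y (a + s * (b - a))))
                 (\<lambda>s. (b - a) *\<^sub>R (xd (a + s * (b - a)), yd (a + s * (b - a))))"
    using C1_curve_rescale[where c="\<lambda>t. (x t, y t)", OF arc_interval d c] by simp
  show "continuous_on ((\<lambda>t. (x t, y t)) ` {a..b}) F \<Longrightarrow> line_integral F (\<lambda>s. (x (a + s * (b - a)), y (a + s * (b - a))))
          (\<lambda>s. (b - a) *\<^sub>R (xd (a + s * (b - a)), yd (a + s * (b - a)))) =
        integral {a..b} (\<lambda>t. F (x t, y t) \<bullet> (xd t, yd t))"
    using line_integral_rescale[where c="\<lambda>t. (x t, y t)", OF arc_interval d c] by simp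
qed

text \<open>Integrating the closed form \<open>\<psi>(r) dx - \<phi>(r) dy\<close> around the curvilinear triangle
  \<open>P \<rightarrow> Q \<rightarrow> M \<rightarrow> P\<close>; on the characteristics \<open>dy = \<lambda>\<^sub>k dx\<close>.\<close>
lemma line_integral_identity:
  assumes "lin_sys lam1 lam2 R \<phi> \<psi>"
  shows "integral {a..b} (\<lambda>t. \<psi> (r1 (x t, y t), r2 (x t, y t)) * xd t - \<phi> (r1 (x t, y t), r2 (x t, y t)) * yd t) =
      (Mx - x a) * integral {0..1} (\<lambda>s. \<psi> (r1 (gamma2 s), r2 (gamma2 s))
                                     - lam2 (r1 (gamma2 s), r2 (gamma2 s)) * \<phi> (r1 (gamma2 s), r2 (gamma2 s)))
    - (Mx - x b) * integral {0..1} (\<lambda>s. \<psi> (r1 (gamma1 s), r2 (gamma1 s))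
                                     - lam1 (r1 (gamma1 s), r2 (gamma1 s)) * \<phi> (r1 (gamma1 s), r2 (gamma1 s)))"
proof -
  define F where "F p = (\<psi> (r1 p, r2 p), - \<phi> (r1 p, r2 p))" for p
  obtain DF where dF: "\<And>p. p \<in> \<Omega> \<Longrightarrow> (F has_derivative blinfun_apply (DF p)) (at p)"
    and cDF: "continuous_on \<Omega> DF"
    and sym: "\<And>p h k. p \<in> \<Omega> \<Longrightarrow> blinfun_apply (DF p) h \<bullet> k = blinfun_apply (DF p) k \<bullet> h"
    using linear_system_closed_form[OF open_range assms invariants_in_range has_derivative_r1 has_derivative_r2
        transport1 transport2 continuous_gradients]
    unfolding F_def by blast
  have "continuous_on \<Omega> F"
    by (rule has_derivative_continuous_on[of \<Omega> F "\<lambda>p. blinfun_apply (DF p)"])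
      (simp add: dF has_derivative_at_withinI)
  then have "continuous_on ((\<lambda>t. (x t, y t)) ` {a..b}) F"
    using arc_in_domain by (auto intro: continuous_on_subset)
  note arc = line_integral_arc[OF this]
  have characteristic: "line_integral F \<gamma> (\<lambda>s. (Mx - c) *\<^sub>R (1, L (\<gamma> s))) =
      (Mx - c) * integral {0..1} (\<lambda>s. \<psi> (r1 (\<gamma> s), r2 (\<gamma> s)) - L (\<gamma> s) * \<phi> (r1 (\<gamma> s), r2 (\<gamma> s)))"
    for \<gamma> L c
  proof -
    have "F (\<gamma> s) \<bullet> ((Mx - c) *\<^sub>R (1, L (\<gamma> s))) =
        (Mx - c) * (\<psi> (r1 (\<gamma> s), r2 (\<gamma> s)) - L (\<gamma> s) * \<phi> (r1 (\<gamma> s), r2 (\<gamma> s)))" for s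
      by (simp add: F_def algebra_simps)
    then show ?thesis
      by (simp add: line_integral_def)
  qed
  have "line_integral F (\<lambda>s. (x (a + s * (b - a)), y (a + s * (b - a))))
          (\<lambda>s. (b - a) *\<^sub>R (xd (a + s * (b - a)), yd (a + s * (b - a))))
      + line_integral F gamma1 (\<lambda>s. (Mx - x b) *\<^sub>R (1, lam1 (r1 (gamma1 s), r2 (gamma1 s))))
      = line_integral F gamma2 (\<lambda>s. (Mx - x a) *\<^sub>R (1, lam2 (r1 (gamma2 s), r2 (gamma2 s))))"
  proof (rule closed_form_triangle_line_integral[OF open_domain simply_connected_domain dF cDF sym
        C1_curve_arc C1_curve_gamma])
    show "(\<lambda>s. (x (a + s * (b - a)), y (a + s * (b - a)))) ` {0..1} \<subseteq> \<Omega>"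
      using arc_in_domain affine_01_in_interval arc_interval by auto
  qed (use gamma_in_domain in \<open>auto simp: gamma1_def gamma2_def linepath_0' linepath_1'
         g1_start g1_end g2_start g2_end\<close>)
  then show ?thesis
    using arc characteristic[where \<gamma>=gamma1 and L="\<lambda>p. lam1 (r1 p, r2 p)" and c="x b"]
      characteristic[where \<gamma>=gamma2 and L="\<lambda>p. lam2 (r1 p, r2 p)" and c="x a"]
    by (simp add: F_def algebra_simps)
qed

theorem solution_by_problem1:
  assumes "lin_problem1 lam1 lam2 R (r1 (x b, y b)) (r2 (x a, y a)) \<phi> \<psi>"
  shows "Mx = x b - integral {a..b} (\<lambda>t. \<psi> (r1 (x t, y t), r2 (x t, y t)) * xd t
                                          - \<phi> (r1 (x t, y t), r2 (x t, y t)) * yd t)"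
proof -
  have "integral {0..1} (\<lambda>s. \<psi> (r1 (gamma1 s), r2 (gamma1 s))
          - lam1 (r1 (gamma1 s), r2 (gamma1 s)) * \<phi> (r1 (gamma1 s), r2 (gamma1 s))) = integral {0..1} (\<lambda>s::real. 1)"
  proof (rule Henstock_Kurzweil_Integration.integral_cong)
    fix s :: real assume "s \<in> {0..1}"
    with assms show "\<psi> (r1 (gamma1 s), r2 (gamma1 s))
        - lam1 (r1 (gamma1 s), r2 (gamma1 s)) * \<phi> (r1 (gamma1 s), r2 (gamma1 s)) = 1"
      using invariants_on_gamma by (auto simp: lin_problem1_def)
  qed
  moreover have "integral {0..1} (\<lambda>s. \<psi> (r1 (gamma2 s), r2 (gamma2 s))
          - lam2 (r1 (gamma2 s), r2 (gamma2 s)) * \<phi> (r1 (gamma2 s), r2 (gamma2 s))) = integral {0..1} (\<lambda>s::real. 0)"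
  proof (rule Henstock_Kurzweil_Integration.integral_cong)
    fix s :: real assume "s \<in> {0..1}"
    with assms show "\<psi> (r1 (gamma2 s), r2 (gamma2 s))
        - lam2 (r1 (gamma2 s), r2 (gamma2 s)) * \<phi> (r1 (gamma2 s), r2 (gamma2 s)) = 0"
      using invariants_on_gamma by (auto simp: lin_problem1_def)
  qed
  ultimately show ?thesis
    using line_integral_identity assms by (simp add: lin_problem1_def)
qed

lemma integral_speed_gamma1: "(Mx - x b) * integral {0..1} (\<lambda>s. lam1 (r1 (gamma1 s), r2 (gamma1 s))) = My - y b"
proof -
  have "((\<lambda>s. snd (gamma1 s)) has_vector_derivative (Mx - x b) * lam1 (r1 (gamma1 s), r2 (gamma1 s)))
          (at s within {0..1})" if "s \<in> {0..1}" for s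
    using bounded_linear.has_vector_derivative[OF bounded_linear_snd] C1_curve_gamma(1) that
    by (fastforce simp: C1_curve_def)
  from fundamental_theorem_of_calculus[OF zero_le_one this]
  have "((\<lambda>s. (Mx - x b) * lam1 (r1 (gamma1 s), r2 (gamma1 s))) has_integral My - y b) {0..1}"
    by (simp add: gamma1_def linepath_0' linepath_1' g1_start g1_end)
  from integral_unique[OF this] show ?thesis
    by simp
qed

theorem solution_by_problem2:
  assumes "\<forall>z\<in>R. lam1 z \<noteq> 0 \<and> lam2 z \<noteq> 0" and "lin_problem2 lam1 lam2 R (r1 (x b, y b)) (r2 (x a, y a)) \<phi> \<psi>"
  shows "My = y b - integral {a..b} (\<lambda>t. \<psi> (r1 (x t, y t), r2 (x t, y t)) * xd t
                                          - \<phi> (r1 (x t, y t), r2 (x t, y t)) * yd t)"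
proof -
  have "integral {0..1} (\<lambda>s. \<psi> (r1 (gamma1 s), r2 (gamma1 s))
          - lam1 (r1 (gamma1 s), r2 (gamma1 s)) * \<phi> (r1 (gamma1 s), r2 (gamma1 s))) =
        integral {0..1} (\<lambda>s. lam1 (r1 (gamma1 s), r2 (gamma1 s)))"
  proof (rule Henstock_Kurzweil_Integration.integral_cong)
    fix s :: real assume "s \<in> {0..1}"
    with assms show "\<psi> (r1 (gamma1 s), r2 (gamma1 s))
        - lam1 (r1 (gamma1 s), r2 (gamma1 s)) * \<phi> (r1 (gamma1 s), r2 (gamma1 s)) = lam1 (r1 (gamma1 s), r2 (gamma1 s))"
      using invariants_on_gamma by (auto simp: lin_problem2_def field_simps)
  qed
  moreover have "integral {0..1} (\<lambda>s. \<psi> (r1 (gamma2 s), r2 (gamma2 s))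
          - lam2 (r1 (gamma2 s), r2 (gamma2 s)) * \<phi> (r1 (gamma2 s), r2 (gamma2 s))) = integral {0..1} (\<lambda>s::real. 0)"
  proof (rule Henstock_Kurzweil_Integration.integral_cong)
    fix s :: real assume "s \<in> {0..1}"
    with assms show "\<psi> (r1 (gamma2 s), r2 (gamma2 s))
        - lam2 (r1 (gamma2 s), r2 (gamma2 s)) * \<phi> (r1 (gamma2 s), r2 (gamma2 s)) = 0"
      using invariants_on_gamma by (auto simp: lin_problem2_def field_simps)
  qed
  ultimately show ?thesis
    using line_integral_identity assms(2) integral_speed_gamma1 by (simp add: lin_problem2_def)
qed

end

theorem theorem1:
  fixes m11 m12 m21 m22 :: "real \<times> real \<Rightarrow> real"
    and W :: "(real \<times> real) set"
    and \<Phi>1 \<Phi>2 :: "real \<times> real \<Rightarrow> real"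
    and lam1 lam2 :: "real \<times> real \<Rightarrow> real"
    and R :: "(real \<times> real) set"
    and \<Omega> :: "(real \<times> real) set"
    and u v :: "real \<times> real \<Rightarrow> real"
    and x y xd yd u0 v0 :: "real \<Rightarrow> real"
    and a b :: real
    and Mx My :: real
    and g1 g2 :: "real \<Rightarrow> real"
  assumes
    \<comment> \<open>state domain, coefficient matrix M(u,v)\<close>
    W_open: "open W"
    and M_cont: "continuous_on W m11" "continuous_on W m12" "continuous_on W m21" "continuous_on W m22"
    \<comment> \<open>Riemann invariants: grad Phi_k is a (nonzero) left eigenvector l_k of M with eigenvalue
        lambda_k, regarded as a function of (r1,r2)\<close>
    and Phi_C1: "C1_on \<Phi>1 W" "C1_on \<Phi>2 W"
    and R_open: "open R"
    and Phi_R: "\<And>w. w \<in> W \<Longrightarrow> (\<Phi>1 w, \<Phi>2 w) \<in> R"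
    and left_eig1: "\<And>w. w \<in> W \<Longrightarrow>
        pd1 \<Phi>1 w * m11 w + pd2 \<Phi>1 w * m21 w = lam1 (\<Phi>1 w, \<Phi>2 w) * pd1 \<Phi>1 w \<and>
        pd1 \<Phi>1 w * m12 w + pd2 \<Phi>1 w * m22 w = lam1 (\<Phi>1 w, \<Phi>2 w) * pd2 \<Phi>1 w \<and>
        (pd1 \<Phi>1 w, pd2 \<Phi>1 w) \<noteq> (0, 0)"
    and left_eig2: "\<And>w. w \<in> W \<Longrightarrow>
        pd1 \<Phi>2 w * m11 w + pd2 \<Phi>2 w * m21 w = lam2 (\<Phi>1 w, \<Phi>2 w) * pd1 \<Phi>2 w \<and>
        pd1 \<Phi>2 w * m12 w + pd2 \<Phi>2 w * m22 w = lam2 (\<Phi>1 w, \<Phi>2 w) * pd2 \<Phi>2 w \<and>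
        (pd1 \<Phi>2 w, pd2 \<Phi>2 w) \<noteq> (0, 0)"
    \<comment> \<open>strict hyperbolicity\<close>
    and strict_hyp: "\<And>w. w \<in> W \<Longrightarrow> lam1 (\<Phi>1 w, \<Phi>2 w) \<noteq> lam2 (\<Phi>1 w, \<Phi>2 w)"
    \<comment> \<open>the (C^1) solution U = (u,v) of the quasilinear system on the domain Omega\<close>
    and Omega_open: "open \<Omega>" and Omega_sc: "simply_connected \<Omega>"
    and U_C1: "C1_on u \<Omega>" "C1_on v \<Omega>"
    and U_W: "\<And>p. p \<in> \<Omega> \<Longrightarrow> (u p, v p) \<in> W"
    and pde: "\<And>p. p \<in> \<Omega> \<Longrightarrow>
        pd1 u p + m11 (u p, v p) * pd2 u p + m12 (u p, v p) * pd2 v p = 0 \<and>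
        pd1 v p + m21 (u p, v p) * pd2 u p + m22 (u p, v p) * pd2 v p = 0"
    \<comment> \<open>the non-characteristic C^1 arc C = {(x(tau),y(tau)) | tau in [a,b]} and Cauchy data\<close>
    and ab: "a < b"
    and x_deriv: "\<And>t. t \<in> {a..b} \<Longrightarrow> (x has_real_derivative xd t) (at t within {a..b})"
    and y_deriv: "\<And>t. t \<in> {a..b} \<Longrightarrow> (y has_real_derivative yd t) (at t within {a..b})"
    and xd_cont: "continuous_on {a..b} xd" and yd_cont: "continuous_on {a..b} yd"
    and C_Omega: "\<And>t. t \<in> {a..b} \<Longrightarrow> (x t, y t) \<in> \<Omega>"
    and noncharacteristic: "\<And>t. t \<in> {a..b} \<Longrightarrow>
        yd t \<noteq> lam1 (rinv \<Phi>1 \<Phi>2 u v (x t, y t)) * xd t \<and>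
        yd t \<noteq> lam2 (rinv \<Phi>1 \<Phi>2 u v (x t, y t)) * xd t"
    and cauchy: "\<And>t. t \<in> {a..b} \<Longrightarrow> u (x t, y t) = u0 t \<and> v (x t, y t) = v0 t"
    \<comment> \<open>M = (Mx,My): characteristic of the first family (dy/dx = lambda1) issuing from Q
        and characteristic of the second family (dy/dx = lambda2) issuing from P meet at M\<close>
    and g1_Q: "g1 (x b) = y b" and g1_M: "g1 Mx = My"
    and g1_Omega: "\<And>t. t \<in> closed_segment (x b) Mx \<Longrightarrow> (t, g1 t) \<in> \<Omega>"
    and g1_char: "\<And>t. t \<in> closed_segment (x b) Mx \<Longrightarrow>
        (g1 has_real_derivative lam1 (rinv \<Phi>1 \<Phi>2 u v (t, g1 t))) (at t within closed_segment (x b) Mx)"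
    and g2_P: "g2 (x a) = y a" and g2_M: "g2 Mx = My"
    and g2_Omega: "\<And>t. t \<in> closed_segment (x a) Mx \<Longrightarrow> (t, g2 t) \<in> \<Omega>"
    and g2_char: "\<And>t. t \<in> closed_segment (x a) Mx \<Longrightarrow>
        (g2 has_real_derivative lam2 (rinv \<Phi>1 \<Phi>2 u v (t, g2 t))) (at t within closed_segment (x a) Mx)"
  shows
    "\<Phi>1 (u (Mx, My), v (Mx, My)) = \<Phi>1 (u0 b, v0 b) \<and>
     \<Phi>2 (u (Mx, My), v (Mx, My)) = \<Phi>2 (u0 a, v0 a) \<and>
     (\<forall>\<phi> \<psi>. lin_problem1 lam1 lam2 R (\<Phi>1 (u0 b, v0 b)) (\<Phi>2 (u0 a, v0 a)) \<phi> \<psi> \<longrightarrow>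
        Mx = x b - integral {a..b} (\<lambda>t. \<psi> (rinv \<Phi>1 \<Phi>2 u v (x t, y t)) * xd t
                                       - \<phi> (rinv \<Phi>1 \<Phi>2 u v (x t, y t)) * yd t)) \<and>
     ((\<forall>z\<in>R. lam1 z \<noteq> 0 \<and> lam2 z \<noteq> 0) \<longrightarrow>
      (\<forall>\<phi> \<psi>. lin_problem2 lam1 lam2 R (\<Phi>1 (u0 b, v0 b)) (\<Phi>2 (u0 a, v0 a)) \<phi> \<psi> \<longrightarrow>
        My = y b - integral {a..b} (\<lambda>t. \<psi> (rinv \<Phi>1 \<Phi>2 u v (x t, y t)) * xd t
                                       - \<phi> (rinv \<Phi>1 \<Phi>2 u v (x t, y t)) * yd t)))"
proof -
  have eig1: "\<And>w. w \<in> W \<Longrightarrow> pd1 \<Phi>1 w * m11 w + pd2 \<Phi>1 w * m21 w = lam1 (\<Phi>1 w, \<Phi>2 w) * pd1 \<Phi>1 w \<and>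
      pd1 \<Phi>1 w * m12 w + pd2 \<Phi>1 w * m22 w = lam1 (\<Phi>1 w, \<Phi>2 w) * pd2 \<Phi>1 w"
    and eig2: "\<And>w. w \<in> W \<Longrightarrow> pd1 \<Phi>2 w * m11 w + pd2 \<Phi>2 w * m21 w = lam2 (\<Phi>1 w, \<Phi>2 w) * pd1 \<Phi>2 w \<and>
      pd1 \<Phi>2 w * m12 w + pd2 \<Phi>2 w * m22 w = lam2 (\<Phi>1 w, \<Phi>2 w) * pd2 \<Phi>2 w"
    using left_eig1 left_eig2 by blast+
  obtain A1 B1 where "continuous_on \<Omega> A1" "continuous_on \<Omega> B1"
    "\<And>p. p \<in> \<Omega> \<Longrightarrow> ((\<lambda>p. \<Phi>1 (u p, v p)) has_derivative (\<lambda>h. fst h * A1 p + snd h * B1 p)) (at p)"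
    "\<And>p. p \<in> \<Omega> \<Longrightarrow> A1 p + lam1 (\<Phi>1 (u p, v p), \<Phi>2 (u p, v p)) * B1 p = 0"
    using riemann_invariant_transport[OF W_open Phi_C1(1) Omega_open U_C1 U_W pde eig1] by blast
  moreover obtain A2 B2 where "continuous_on \<Omega> A2" "continuous_on \<Omega> B2"
    "\<And>p. p \<in> \<Omega> \<Longrightarrow> ((\<lambda>p. \<Phi>2 (u p, v p)) has_derivative (\<lambda>h. fst h * A2 p + snd h * B2 p)) (at p)"
    "\<And>p. p \<in> \<Omega> \<Longrightarrow> A2 p + lam2 (\<Phi>1 (u p, v p), \<Phi>2 (u p, v p)) * B2 p = 0"
    using riemann_invariant_transport[OF W_open Phi_C1(2) Omega_open U_C1 U_W pde eig2] by blast
  moreover have "continuous_on \<Omega> (\<lambda>p. lam1 (\<Phi>1 (u p, v p), \<Phi>2 (u p, v p)))"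
    "continuous_on \<Omega> (\<lambda>p. lam2 (\<Phi>1 (u p, v p), \<Phi>2 (u p, v p)))"
  proof -
    have "continuous_on \<Omega> (\<lambda>p. (u p, v p))"
      using U_C1 unfolding C1_on_def by (intro continuous_intros differentiable_imp_continuous_on) auto
    moreover have "(\<lambda>p. (u p, v p)) ` \<Omega> \<subseteq> W"
      using U_W by auto
    ultimately show "continuous_on \<Omega> (\<lambda>p. lam1 (\<Phi>1 (u p, v p), \<Phi>2 (u p, v p)))"
      "continuous_on \<Omega> (\<lambda>p. lam2 (\<Phi>1 (u p, v p), \<Phi>2 (u p, v p)))"
      using continuous_on_compose2[OF left_eigenvalue_continuous_on[OF Phi_C1(1) M_cont left_eig1]]
        continuous_on_compose2[OF left_eigenvalue_continuous_on[OF Phi_C1(2) M_cont left_eig2]] by auto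
  qed
  ultimately interpret characteristic_triangle \<Omega> R "\<lambda>p. \<Phi>1 (u p, v p)" "\<lambda>p. \<Phi>2 (u p, v p)" lam1 lam2
      A1 B1 A2 B2 x y xd yd g1 g2 a b Mx My
    using Omega_open Omega_sc R_open Phi_R U_W ab x_deriv y_deriv xd_cont yd_cont C_Omega
      g1_Q g1_M g1_Omega g1_char g2_P g2_M g2_Omega g2_char
    by unfold_locales (simp_all add: rinv_def)
  have "\<Phi>1 (u (x b, y b), v (x b, y b)) = \<Phi>1 (u0 b, v0 b)" "\<Phi>2 (u (x a, y a), v (x a, y a)) = \<Phi>2 (u0 a, v0 a)"
    using cauchy ab by auto
  then show ?thesis
    using invariants_at_meeting_point solution_by_problem1 solution_by_problem2 by (simp add: rinv_def)
qed

end
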